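(* A sequent $\Gamma\vdash M$ is provable in system $\mathcal S$ if and only if it is provable in system $\mathcal L$.
   Context: Fix countably infinite sets of names and variables and the constructors $\mathsf{pub}$ (unary) and $\mathsf{sign},\mathsf{blind},\langle\cdot,\cdot\rangle,\{\cdot\}_{\cdot}$ (binary). Let $E$ be an equational theory whose signature $\Sigma_E$ is disjoint from the constructors, containing at most one associative-commutative (AC) binary symbol $\oplus$, presented by a rewrite system $R_E$ terminating and confluent modulo AC of $\oplus$. Terms: names, variables, $\mathsf{pub}(M)$, $\mathsf{sign}(M,N)$, $\mathsf{blind}(M,N)$, $\langle M,N\rangle$, $\{M\}_N$, $g(M_1,\dots,M_j)$ with $g\in\Sigma_E$; all ground. $\equiv$ is equality modulo AC, $\approx_E$ equality modulo $E$. A term is guarded if it is a name, a variable, or headed by a constructor. An $E$-context is a term with holes built only from symbols of $\Sigma_E$. Sequents $\Gamma\vdash M$ ($\Gamma$ a finite set of terms) have all terms in $R_E$-normal form modulo AC; $\Gamma,M$ means $\Gamma\cup\{M\}$. System $\mathcal S$: (id) $\Gamma\vdash M$ with no premise if $M\approx_E C[M_1,\dots,M_k]$ for an $E$-context $C$ and $M_i\in\Gamma$; (cut) from $\Gamma\vdash M$, $\Gamma,M\vdash T$ infer $\Gamma\vdash T$; ($p_L$) from $\Gamma,\langle M,N\rangle,M,N\vdash T$ infer $\Gamma,\langle M,N\rangle\vdash T$; ($p_R$) from $\Gamma\vdash M$, $\Gamma\vdash N$ infer $\Gamma\vdash\langle M,N\rangle$; ($e_L$) from $\Gamma,\{M\}_K\vdash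 K$ and $\Gamma,\{M\}_K,M,K\vdash N$ infer $\Gamma,\{M\}_K\vdash N$; ($e_R$) from $\Gamma\vdash M$, $\Gamma\vdash K$ infer $\Gamma\vdash\{M\}_K$; ($\mathsf{sign}_L$) from $\Gamma,\mathsf{sign}(M,K),\mathsf{pub}(L),M\vdash N$ infer $\Gamma,\mathsf{sign}(M,K),\mathsf{pub}(L)\vdash N$ provided $K\equiv L$; ($\mathsf{sign}_R$) from $\Gamma\vdash M$, $\Gamma\vdash K$ infer $\Gamma\vdash\mathsf{sign}(M,K)$; ($\mathsf{blind}_{L1}$) from $\Gamma,\mathsf{blind}(M,K)\vdash K$ and $\Gamma,\mathsf{blind}(M,K),M,K\vdash N$ infer $\Gamma,\mathsf{blind}(M,K)\vdash N$; ($\mathsf{blind}_R$) from $\Gamma\vdash M$, $\Gamma\vdash K$ infer $\Gamma\vdash\mathsf{blind}(M,K)$; ($\mathsf{blind}_{L2}$) from $\Gamma,\mathsf{sign}(\mathsf{blind}(M,R),K)\vdash R$ and $\Gamma,\mathsf{sign}(\mathsf{blind}(M,R),K),\mathsf{sign}(M,K),R\vdash N$ infer $\Gamma,\mathsf{sign}(\mathsf{blind}(M,R),K)\vdash N$; ($gs$) from $\Gamma\vdash A$, $\Gamma,A\vdash M$ infer $\Gamma\vdash M$, provided $A$ is a guarded subterm of a term in $\Gamma\cup\{M\}$. $\Gamma\Vdash_{\mathcal R}M$ means $\Gamma\vdash M$ is derivable in $\mathcal S$ using only (id), $p_R,e_R,\mathsf{sign}_R,\mathsf{blind}_R$. System $\mathcal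 L$: ($r$) $\Gamma\vdash M$ with no premise if $\Gamma\Vdash_{\mathcal R}M$; ($lp$) from $\Gamma,\langle M,N\rangle,M,N\vdash T$ infer $\Gamma,\langle M,N\rangle\vdash T$; ($le$) from $\Gamma,\{M\}_K,M,K\vdash N$ infer $\Gamma,\{M\}_K\vdash N$ provided $\Gamma,\{M\}_K\Vdash_{\mathcal R}K$; ($\mathsf{sign}$) from $\Gamma,\mathsf{sign}(M,K),\mathsf{pub}(L),M\vdash N$ infer $\Gamma,\mathsf{sign}(M,K),\mathsf{pub}(L)\vdash N$ provided $K\equiv L$; ($\mathsf{blind}_1$) from $\Gamma,\mathsf{blind}(M,K),M,K\vdash N$ infer $\Gamma,\mathsf{blind}(M,K)\vdash N$ provided $\Gamma,\mathsf{blind}(M,K)\Vdash_{\mathcal R}K$; ($\mathsf{blind}_2$) from $\Gamma,\mathsf{sign}(\mathsf{blind}(M,R),K),\mathsf{sign}(M,K),R\vdash N$ infer $\Gamma,\mathsf{sign}(\mathsf{blind}(M,R),K)\vdash N$ provided $\Gamma,\mathsf{sign}(\mathsf{blind}(M,R),K)\Vdash_{\mathcal R}R$; ($ls$) from $\Gamma,A\vdash M$ infer $\Gamma\vdash M$ provided $A$ is a guarded subterm of a term in $\Gamma\cup\{M\}$ and $\Gamma\Vdash_{\mathcal R}A$. *)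

theory Defs
  imports Main
begin

text \<open>Names and variables are drawn from countably infinite sets (here nat);
 'f is the signature Sigma_E of the equational theory (disjoint from the constructors
 by construction of the datatype).\<close>

datatype 'f trm =
    Name nat
  | Var nat
  | Pub "'f trm"
  | Sign "'f trm" "'f trm"
  | Blind "'f trm" "'f trm"
  | Pair "'f trm" "'f trm"
  | Enc "'f trm" "'f trm"
  | Fn 'f "'f trm list"

text \<open>Open terms over Sigma_E, used for the rewrite rules of R_E (rule variables of type nat).\<close>
datatype 'f etrm = EV nat | EF 'f "'f etrm list"

fun inst :: "(nat \<Rightarrow> 'f trm) \<Rightarrow> 'f etrm \<Rightarrow> 'f trm" where
  "inst \<sigma> (EV x) = \<sigma> x"
| "inst \<sigma> (EF f ts) = Fn f (map (inst \<sigma>) ts)"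

fun evars :: "'f etrm \<Rightarrow> nat set" where
  "evars (EV x) = {x}"
| "evars (EF f ts) = \<Union> (set (map evars ts))"

inductive wf_trm :: "('f \<Rightarrow> nat) \<Rightarrow> 'f trm \<Rightarrow> bool" for ar where
  "wf_trm ar (Name n)"
| "wf_trm ar (Var v)"
| "wf_trm ar M \<Longrightarrow> wf_trm ar (Pub M)"
| "wf_trm ar M \<Longrightarrow> wf_trm ar N \<Longrightarrow> wf_trm ar (Sign M N)"
| "wf_trm ar M \<Longrightarrow> wf_trm ar N \<Longrightarrow> wf_trm ar (Blind M N)"
| "wf_trm ar M \<Longrightarrow> wf_trm ar N \<Longrightarrow> wf_trm ar (Pair M N)"
| "wf_trm ar M \<Longrightarrow> wf_trm ar N \<Longrightarrow> wf_trm ar (Enc M N)"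
| "length ts = ar f \<Longrightarrow> (\<forall>t\<in>set ts. wf_trm ar t) \<Longrightarrow> wf_trm ar (Fn f ts)"

inductive wf_etrm :: "('f \<Rightarrow> nat) \<Rightarrow> 'f etrm \<Rightarrow> bool" for ar where
  "wf_etrm ar (EV x)"
| "length ts = ar f \<Longrightarrow> (\<forall>t\<in>set ts. wf_etrm ar t) \<Longrightarrow> wf_etrm ar (EF f ts)"

inductive ctxt_cl :: "('f trm \<Rightarrow> 'f trm \<Rightarrow> bool) \<Rightarrow> 'f trm \<Rightarrow> 'f trm \<Rightarrow> bool" for S where
  base: "S s t \<Longrightarrow> ctxt_cl S s t"
| pub: "ctxt_cl S s t \<Longrightarrow> ctxt_cl S (Pub s) (Pub t)"
| sign1: "ctxt_cl S s t \<Longrightarrow> ctxt_cl S (Sign s u) (Sign t u)"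
| sign2: "ctxt_cl S s t \<Longrightarrow> ctxt_cl S (Sign u s) (Sign u t)"
| blind1: "ctxt_cl S s t \<Longrightarrow> ctxt_cl S (Blind s u) (Blind t u)"
| blind2: "ctxt_cl S s t \<Longrightarrow> ctxt_cl S (Blind u s) (Blind u t)"
| pair1: "ctxt_cl S s t \<Longrightarrow> ctxt_cl S (Pair s u) (Pair t u)"
| pair2: "ctxt_cl S s t \<Longrightarrow> ctxt_cl S (Pair u s) (Pair u t)"
| enc1: "ctxt_cl S s t \<Longrightarrow> ctxt_cl S (Enc s u) (Enc t u)"
| enc2: "ctxt_cl S s t \<Longrightarrow> ctxt_cl S (Enc u s) (Enc u t)"
| fn: "ctxt_cl S s t \<Longrightarrow> ctxt_cl S (Fn f (xs @ s # ys)) (Fn f (xs @ t # ys))"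

inductive ac_root :: "'f option \<Rightarrow> 'f trm \<Rightarrow> 'f trm \<Rightarrow> bool" for pl where
  assoc: "pl = Some p \<Longrightarrow> ac_root pl (Fn p [a, Fn p [b, c]]) (Fn p [Fn p [a, b], c])"
| assoc': "pl = Some p \<Longrightarrow> ac_root pl (Fn p [Fn p [a, b], c]) (Fn p [a, Fn p [b, c]])"
| comm: "pl = Some p \<Longrightarrow> ac_root pl (Fn p [a, b]) (Fn p [b, a])"

definition ac_eq :: "'f option \<Rightarrow> 'f trm \<Rightarrow> 'f trm \<Rightarrow> bool" where
  "ac_eq pl = (ctxt_cl (ac_root pl))\<^sup>*\<^sup>*"

inductive r_root :: "('f etrm \<times> 'f etrm) set \<Rightarrow> 'f trm \<Rightarrow> 'f trm \<Rightarrow> bool" for R where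
  "(l, r) \<in> R \<Longrightarrow> r_root R (inst \<sigma> l) (inst \<sigma> r)"

definition rstep :: "('f etrm \<times> 'f etrm) set \<Rightarrow> 'f trm \<Rightarrow> 'f trm \<Rightarrow> bool" where
  "rstep R = ctxt_cl (r_root R)"

definition rstep_ac :: "'f option \<Rightarrow> ('f etrm \<times> 'f etrm) set \<Rightarrow> 'f trm \<Rightarrow> 'f trm \<Rightarrow> bool" where
  "rstep_ac pl R s t \<longleftrightarrow> (\<exists>s' t'. ac_eq pl s s' \<and> rstep R s' t' \<and> ac_eq pl t' t)"

text \<open>Equality modulo E, where E is presented by R_E together with AC.\<close>
definition eqE :: "'f option \<Rightarrow> ('f etrm \<times> 'f etrm) set \<Rightarrow> 'f trm \<Rightarrow> 'f trm \<Rightarrow> bool" where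
  "eqE pl R = (\<lambda>s t. rstep R s t \<or> rstep R t s \<or> ctxt_cl (ac_root pl) s t)\<^sup>*\<^sup>*"

definition terminating_ac :: "('f \<Rightarrow> nat) \<Rightarrow> 'f option \<Rightarrow> ('f etrm \<times> 'f etrm) set \<Rightarrow> bool" where
  "terminating_ac ar pl R \<longleftrightarrow>
     \<not> (\<exists>f :: nat \<Rightarrow> 'f trm. wf_trm ar (f 0) \<and> (\<forall>i. rstep_ac pl R (f i) (f (Suc i))))"

definition confluent_ac :: "('f \<Rightarrow> nat) \<Rightarrow> 'f option \<Rightarrow> ('f etrm \<times> 'f etrm) set \<Rightarrow> bool" where
  "confluent_ac ar pl R \<longleftrightarrow>
     (\<forall>s t. wf_trm ar s \<longrightarrow> wf_trm ar t \<longrightarrow> eqE pl R s t \<longrightarrow>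
        (\<exists>s' t'. (rstep_ac pl R)\<^sup>*\<^sup>* s s' \<and> (rstep_ac pl R)\<^sup>*\<^sup>* t t' \<and> ac_eq pl s' t'))"

text \<open>Standing assumptions on the equational theory E = (arities, optional AC symbol, R_E).\<close>
definition good_theory :: "('f \<Rightarrow> nat) \<Rightarrow> 'f option \<Rightarrow> ('f etrm \<times> 'f etrm) set \<Rightarrow> bool" where
  "good_theory ar pl R \<longleftrightarrow>
     (\<forall>p. pl = Some p \<longrightarrow> ar p = 2) \<and>
     (\<forall>(l, r) \<in> R. wf_etrm ar l \<and> wf_etrm ar r \<and> (\<forall>x. l \<noteq> EV x) \<and> evars r \<subseteq> evars l) \<and>
     terminating_ac ar pl R \<and> confluent_ac ar pl R"

definition nf :: "('f \<Rightarrow> nat) \<Rightarrow> 'f option \<Rightarrow> ('f etrm \<times> 'f etrm) set \<Rightarrow> 'f trm \<Rightarrow> bool" where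
  "nf ar pl R t \<longleftrightarrow> wf_trm ar t \<and> \<not> (\<exists>u. rstep_ac pl R t u)"

definition seq_ok :: "('f \<Rightarrow> nat) \<Rightarrow> 'f option \<Rightarrow> ('f etrm \<times> 'f etrm) set \<Rightarrow> 'f trm set \<Rightarrow> 'f trm \<Rightarrow> bool" where
  "seq_ok ar pl R \<Gamma> M \<longleftrightarrow> finite \<Gamma> \<and> (\<forall>t\<in>\<Gamma>. nf ar pl R t) \<and> nf ar pl R M"

text \<open>Terms of the form C[M1,...,Mk] with C an E-context and Mi in Gamma.\<close>
inductive_set ectx :: "('f \<Rightarrow> nat) \<Rightarrow> 'f trm set \<Rightarrow> 'f trm set" for ar \<Gamma> where
  hole: "M \<in> \<Gamma> \<Longrightarrow> M \<in> ectx ar \<Gamma>"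
| fn: "length ts = ar f \<Longrightarrow> (\<forall>t\<in>set ts. t \<in> ectx ar \<Gamma>) \<Longrightarrow> Fn f ts \<in> ectx ar \<Gamma>"

inductive subterm :: "'f trm \<Rightarrow> 'f trm \<Rightarrow> bool" where
  refl: "subterm t t"
| pub: "subterm s t \<Longrightarrow> subterm s (Pub t)"
| sign1: "subterm s t \<Longrightarrow> subterm s (Sign t u)"
| sign2: "subterm s u \<Longrightarrow> subterm s (Sign t u)"
| blind1: "subterm s t \<Longrightarrow> subterm s (Blind t u)"
| blind2: "subterm s u \<Longrightarrow> subterm s (Blind t u)"
| pair1: "subterm s t \<Longrightarrow> subterm s (Pair t u)"
| pair2: "subterm s u \<Longrightarrow> subterm s (Pair t u)"
| enc1: "subterm s t \<Longrightarrow> subterm s (Enc t u)"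
| enc2: "subterm s u \<Longrightarrow> subterm s (Enc t u)"
| fn: "t \<in> set ts \<Longrightarrow> subterm s t \<Longrightarrow> subterm s (Fn f ts)"

fun guarded :: "'f trm \<Rightarrow> bool" where
  "guarded (Fn f ts) = False"
| "guarded _ = True"

inductive provS :: "('f \<Rightarrow> nat) \<Rightarrow> 'f option \<Rightarrow> ('f etrm \<times> 'f etrm) set \<Rightarrow> 'f trm set \<Rightarrow> 'f trm \<Rightarrow> bool"
  for ar pl R where
  idS: "seq_ok ar pl R \<Gamma> M \<Longrightarrow> C \<in> ectx ar \<Gamma> \<Longrightarrow> eqE pl R M C \<Longrightarrow> provS ar pl R \<Gamma> M"
| cut: "seq_ok ar pl R \<Gamma> T \<Longrightarrow> provS ar pl R \<Gamma> M \<Longrightarrow> provS ar pl R (insert M \<Gamma>) T \<Longrightarrow> provS ar pl R \<Gamma> T"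
| pL: "seq_ok ar pl R (insert (Pair M N) \<Gamma>) T \<Longrightarrow>
       provS ar pl R (insert (Pair M N) (insert M (insert N \<Gamma>))) T \<Longrightarrow>
       provS ar pl R (insert (Pair M N) \<Gamma>) T"
| pR: "seq_ok ar pl R \<Gamma> (Pair M N) \<Longrightarrow> provS ar pl R \<Gamma> M \<Longrightarrow> provS ar pl R \<Gamma> N \<Longrightarrow>
       provS ar pl R \<Gamma> (Pair M N)"
| eL: "seq_ok ar pl R (insert (Enc M K) \<Gamma>) N \<Longrightarrow>
       provS ar pl R (insert (Enc M K) \<Gamma>) K \<Longrightarrow>
       provS ar pl R (insert (Enc M K) (insert M (insert K \<Gamma>))) N \<Longrightarrow>
       provS ar pl R (insert (Enc M K) \<Gamma>) N"
| eR: "seq_ok ar pl R \<Gamma> (Enc M K) \<Longrightarrow> provS ar pl R \<Gamma> M \<Longrightarrow> provS ar pl R \<Gamma> K \<Longrightarrow>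
       provS ar pl R \<Gamma> (Enc M K)"
| signL: "seq_ok ar pl R (insert (Sign M K) (insert (Pub L) \<Gamma>)) N \<Longrightarrow> ac_eq pl K L \<Longrightarrow>
       provS ar pl R (insert (Sign M K) (insert (Pub L) (insert M \<Gamma>))) N \<Longrightarrow>
       provS ar pl R (insert (Sign M K) (insert (Pub L) \<Gamma>)) N"
| signR: "seq_ok ar pl R \<Gamma> (Sign M K) \<Longrightarrow> provS ar pl R \<Gamma> M \<Longrightarrow> provS ar pl R \<Gamma> K \<Longrightarrow>
       provS ar pl R \<Gamma> (Sign M K)"
| blindL1: "seq_ok ar pl R (insert (Blind M K) \<Gamma>) N \<Longrightarrow>
       provS ar pl R (insert (Blind M K) \<Gamma>) K \<Longrightarrow>
       provS ar pl R (insert (Blind M K) (insert M (insert K \<Gamma>))) N \<Longrightarrow>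
       provS ar pl R (insert (Blind M K) \<Gamma>) N"
| blindR: "seq_ok ar pl R \<Gamma> (Blind M K) \<Longrightarrow> provS ar pl R \<Gamma> M \<Longrightarrow> provS ar pl R \<Gamma> K \<Longrightarrow>
       provS ar pl R \<Gamma> (Blind M K)"
| blindL2: "seq_ok ar pl R (insert (Sign (Blind M Rr) K) \<Gamma>) N \<Longrightarrow>
       provS ar pl R (insert (Sign (Blind M Rr) K) \<Gamma>) Rr \<Longrightarrow>
       provS ar pl R (insert (Sign (Blind M Rr) K) (insert (Sign M K) (insert Rr \<Gamma>))) N \<Longrightarrow>
       provS ar pl R (insert (Sign (Blind M Rr) K) \<Gamma>) N"
| gs: "seq_ok ar pl R \<Gamma> M \<Longrightarrow> guarded A \<Longrightarrow> (\<exists>t\<in>insert M \<Gamma>. subterm A t) \<Longrightarrow>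
       provS ar pl R \<Gamma> A \<Longrightarrow> provS ar pl R (insert A \<Gamma>) M \<Longrightarrow> provS ar pl R \<Gamma> M"

inductive provR :: "('f \<Rightarrow> nat) \<Rightarrow> 'f option \<Rightarrow> ('f etrm \<times> 'f etrm) set \<Rightarrow> 'f trm set \<Rightarrow> 'f trm \<Rightarrow> bool"
  for ar pl R where
  idR: "seq_ok ar pl R \<Gamma> M \<Longrightarrow> C \<in> ectx ar \<Gamma> \<Longrightarrow> eqE pl R M C \<Longrightarrow> provR ar pl R \<Gamma> M"
| pR: "seq_ok ar pl R \<Gamma> (Pair M N) \<Longrightarrow> provR ar pl R \<Gamma> M \<Longrightarrow> provR ar pl R \<Gamma> N \<Longrightarrow>
       provR ar pl R \<Gamma> (Pair M N)"
| eR: "seq_ok ar pl R \<Gamma> (Enc M K) \<Longrightarrow> provR ar pl R \<Gamma> M \<Longrightarrow> provR ar pl R \<Gamma> K \<Longrightarrow>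
       provR ar pl R \<Gamma> (Enc M K)"
| signR: "seq_ok ar pl R \<Gamma> (Sign M K) \<Longrightarrow> provR ar pl R \<Gamma> M \<Longrightarrow> provR ar pl R \<Gamma> K \<Longrightarrow>
       provR ar pl R \<Gamma> (Sign M K)"
| blindR: "seq_ok ar pl R \<Gamma> (Blind M K) \<Longrightarrow> provR ar pl R \<Gamma> M \<Longrightarrow> provR ar pl R \<Gamma> K \<Longrightarrow>
       provR ar pl R \<Gamma> (Blind M K)"

inductive provL :: "('f \<Rightarrow> nat) \<Rightarrow> 'f option \<Rightarrow> ('f etrm \<times> 'f etrm) set \<Rightarrow> 'f trm set \<Rightarrow> 'f trm \<Rightarrow> bool"
  for ar pl R where
  r: "seq_ok ar pl R \<Gamma> M \<Longrightarrow> provR ar pl R \<Gamma> M \<Longrightarrow> provL ar pl R \<Gamma> M"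
| lp: "seq_ok ar pl R (insert (Pair M N) \<Gamma>) T \<Longrightarrow>
       provL ar pl R (insert (Pair M N) (insert M (insert N \<Gamma>))) T \<Longrightarrow>
       provL ar pl R (insert (Pair M N) \<Gamma>) T"
| le: "seq_ok ar pl R (insert (Enc M K) \<Gamma>) N \<Longrightarrow>
       provR ar pl R (insert (Enc M K) \<Gamma>) K \<Longrightarrow>
       provL ar pl R (insert (Enc M K) (insert M (insert K \<Gamma>))) N \<Longrightarrow>
       provL ar pl R (insert (Enc M K) \<Gamma>) N"
| sign: "seq_ok ar pl R (insert (Sign M K) (insert (Pub L) \<Gamma>)) N \<Longrightarrow> ac_eq pl K L \<Longrightarrow>
       provL ar pl R (insert (Sign M K) (insert (Pub L) (insert M \<Gamma>))) N \<Longrightarrow>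
       provL ar pl R (insert (Sign M K) (insert (Pub L) \<Gamma>)) N"
| blind1: "seq_ok ar pl R (insert (Blind M K) \<Gamma>) N \<Longrightarrow>
       provR ar pl R (insert (Blind M K) \<Gamma>) K \<Longrightarrow>
       provL ar pl R (insert (Blind M K) (insert M (insert K \<Gamma>))) N \<Longrightarrow>
       provL ar pl R (insert (Blind M K) \<Gamma>) N"
| blind2: "seq_ok ar pl R (insert (Sign (Blind M Rr) K) \<Gamma>) N \<Longrightarrow>
       provR ar pl R (insert (Sign (Blind M Rr) K) \<Gamma>) Rr \<Longrightarrow>
       provL ar pl R (insert (Sign (Blind M Rr) K) (insert (Sign M K) (insert Rr \<Gamma>))) N \<Longrightarrow>
       provL ar pl R (insert (Sign (Blind M Rr) K) \<Gamma>) N"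
| ls: "seq_ok ar pl R \<Gamma> M \<Longrightarrow> guarded A \<Longrightarrow> (\<exists>t\<in>insert M \<Gamma>. subterm A t) \<Longrightarrow>
       provR ar pl R \<Gamma> A \<Longrightarrow> provL ar pl R (insert A \<Gamma>) M \<Longrightarrow> provL ar pl R \<Gamma> M"

end

(*
  L is S without cut and with the side premises of the left rules and of (gs) restricted to
  R-derivations, so L-proofs are S-proofs. Conversely it suffices to show that cut is admissible
  in L; by induction on the derivation of the cut formula this reduces to cutting an
  R-derivable formula A, which is done by induction on the size of A and, inside, on the
  L-derivation using A. When A is principal in a left rule, either A was built by right
  rules, and the cut moves to its immediate subterms, or A is E-equal to an E-context over
  the other hypotheses; by confluence a guarded normal form A is then AC-equal to a guarded
  subterm of these hypotheses, which (ls) may add, and the left rule is replayed on it.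
  At (id) leaves, A is replaced by its E-context, or by an arbitrary one when A does not
  occur, modulo AC, among the guarded subterms of the sequent; E-equality is preserved
  because rewriting terms whose guarded subterms are normal creates no guarded subterm.
*)

theory Submission
  imports Defs
begin

lemma subterm_trans: "subterm b c \<Longrightarrow> subterm a b \<Longrightarrow> subterm a c"
  by (induction b c rule: subterm.induct) (auto intro: subterm.intros)

lemma subterm_size_cases: "subterm s t \<Longrightarrow> s = t \<or> size s < size t"
proof (induction rule: subterm.induct)
  case (fn t ts s f)
  then have "size t \<le> size_list size ts" by (simp add: size_list_estimation')
  with fn show ?case by auto
qed auto

lemma subterm_size: "subterm s t \<Longrightarrow> size s \<le> size t"
  using subterm_size_cases by fastforce

inductive_simps subterm_Pub: "subterm s (Pub t)"
inductive_simps subterm_Sign: "subterm s (Sign t u)"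
inductive_simps subterm_Blind: "subterm s (Blind t u)"
inductive_simps subterm_Pair: "subterm s (Pair t u)"
inductive_simps subterm_Enc: "subterm s (Enc t u)"
inductive_simps subterm_Fn: "subterm s (Fn f ts)"
inductive_simps subterm_Name: "subterm s (Name n)"
inductive_simps subterm_Var: "subterm s (Var n)"
lemmas subterm_simps = subterm_Pub subterm_Sign subterm_Blind subterm_Pair subterm_Enc
  subterm_Fn subterm_Name subterm_Var

lemma guarded_subterm_Fn: "subterm x (Fn f ts) \<Longrightarrow> guarded x \<Longrightarrow> \<exists>t\<in>set ts. subterm x t"
  by (auto simp: subterm_Fn)

inductive_simps wf_Pub: "wf_trm ar (Pub t)"
inductive_simps wf_Sign: "wf_trm ar (Sign t u)"
inductive_simps wf_Blind: "wf_trm ar (Blind t u)"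
inductive_simps wf_Pair: "wf_trm ar (Pair t u)"
inductive_simps wf_Enc: "wf_trm ar (Enc t u)"
inductive_simps wf_Fn: "wf_trm ar (Fn f ts)"
lemmas wf_trm_simps = wf_Pub wf_Sign wf_Blind wf_Pair wf_Enc wf_Fn wf_trm.intros(1,2)

lemma wf_trm_subterm: "subterm s t \<Longrightarrow> wf_trm ar t \<Longrightarrow> wf_trm ar s"
  by (induction rule: subterm.induct) (auto simp: wf_trm_simps)

text \<open>A one-hole context is represented by the function filling its hole; it is characterised
  by commuting with the context closure of every relation.\<close>

definition ctxt_fun :: "('f trm \<Rightarrow> 'f trm) \<Rightarrow> bool" where
  "ctxt_fun F \<longleftrightarrow> (\<forall>S a b. ctxt_cl S a b \<longrightarrow> ctxt_cl S (F a) (F b))"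

lemma ctxt_funD: "ctxt_fun F \<Longrightarrow> ctxt_cl S a b \<Longrightarrow> ctxt_cl S (F a) (F b)"
  by (simp add: ctxt_fun_def)

lemma ctxt_fun_id: "ctxt_fun (\<lambda>x. x)"
  and ctxt_fun_comp: "ctxt_fun F \<Longrightarrow> ctxt_fun G \<Longrightarrow> ctxt_fun (\<lambda>x. F (G x))"
  by (simp_all add: ctxt_fun_def)

lemma ctxt_fun_constructors:
  "ctxt_fun Pub"
  "ctxt_fun (\<lambda>x. Sign x u)" "ctxt_fun (\<lambda>x. Sign u x)"
  "ctxt_fun (\<lambda>x. Blind x u)" "ctxt_fun (\<lambda>x. Blind u x)"
  "ctxt_fun (\<lambda>x. Pair x u)" "ctxt_fun (\<lambda>x. Pair u x)"
  "ctxt_fun (\<lambda>x. Enc x u)" "ctxt_fun (\<lambda>x. Enc u x)"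
  by (auto simp: ctxt_fun_def intro: ctxt_cl.intros)

lemma ctxt_fun_Fn: "ctxt_fun (\<lambda>x. Fn f (xs @ x # ys))"
  by (auto simp: ctxt_fun_def intro: ctxt_cl.intros)

lemma subterm_ctxt_fun: "subterm s t \<Longrightarrow> \<exists>F. ctxt_fun F \<and> F s = t"
proof (induction rule: subterm.induct)
  case (fn t ts s f)
  then obtain F where "ctxt_fun F" "F s = t" by blast
  moreover from fn(1) obtain xs ys where "ts = xs @ t # ys" by (meson split_list)
  ultimately show ?case using ctxt_fun_comp[OF ctxt_fun_Fn[of f xs ys]] by fastforce
qed (use ctxt_fun_id in blast,
     (metis ctxt_fun_comp ctxt_fun_constructors)+)

lemma ctxt_fun_rtranclp:
  assumes "ctxt_fun F" shows "(ctxt_cl S)\<^sup>*\<^sup>* a b \<Longrightarrow> (ctxt_cl S)\<^sup>*\<^sup>* (F a) (F b)"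
  by (induction rule: rtranclp_induct)
     (auto intro: rtranclp.rtrancl_into_rtrancl ctxt_funD[OF assms])

lemma ctxt_cl_sym:
  assumes "\<And>a b. S a b \<Longrightarrow> S b a" shows "ctxt_cl S s t \<Longrightarrow> ctxt_cl S t s"
  by (induction rule: ctxt_cl.induct) (auto intro: ctxt_cl.intros assms)

lemma ac_step_sym: "ctxt_cl (ac_root pl) s t \<Longrightarrow> ctxt_cl (ac_root pl) t s"
  by (rule ctxt_cl_sym) (auto elim: ac_root.cases intro: ac_root.intros)

lemma ac_eq_refl [simp]: "ac_eq pl s s"
  by (simp add: ac_eq_def)

lemma ac_eq_step: "ctxt_cl (ac_root pl) s t \<Longrightarrow> ac_eq pl s t"
  by (simp add: ac_eq_def)

lemma ac_eq_sym: "ac_eq pl s t \<Longrightarrow> ac_eq pl t s"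
  unfolding ac_eq_def
  by (induction rule: rtranclp_induct) (auto intro: converse_rtranclp_into_rtranclp ac_step_sym)

lemma ac_eq_trans: "ac_eq pl s t \<Longrightarrow> ac_eq pl t u \<Longrightarrow> ac_eq pl s u"
  unfolding ac_eq_def by auto

lemma ac_eq_ctxt_fun: "ctxt_fun F \<Longrightarrow> ac_eq pl a b \<Longrightarrow> ac_eq pl (F a) (F b)"
  unfolding ac_eq_def by (rule ctxt_fun_rtranclp)

lemma ac_step_Pub: "ctxt_cl (ac_root pl) (Pub a) u \<Longrightarrow> \<exists>a'. u = Pub a' \<and> ac_eq pl a a'"
  by (erule ctxt_cl.cases) (auto elim: ac_root.cases intro: ac_eq_step)
lemma ac_step_Sign:
  "ctxt_cl (ac_root pl) (Sign a b) u \<Longrightarrow> \<exists>a' b'. u = Sign a' b' \<and> ac_eq pl a a' \<and> ac_eq pl b b'"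
  by (erule ctxt_cl.cases) (auto elim: ac_root.cases intro: ac_eq_step)
lemma ac_step_Blind:
  "ctxt_cl (ac_root pl) (Blind a b) u \<Longrightarrow> \<exists>a' b'. u = Blind a' b' \<and> ac_eq pl a a' \<and> ac_eq pl b b'"
  by (erule ctxt_cl.cases) (auto elim: ac_root.cases intro: ac_eq_step)
lemma ac_step_Pair:
  "ctxt_cl (ac_root pl) (Pair a b) u \<Longrightarrow> \<exists>a' b'. u = Pair a' b' \<and> ac_eq pl a a' \<and> ac_eq pl b b'"
  by (erule ctxt_cl.cases) (auto elim: ac_root.cases intro: ac_eq_step)
lemma ac_step_Enc:
  "ctxt_cl (ac_root pl) (Enc a b) u \<Longrightarrow> \<exists>a' b'. u = Enc a' b' \<and> ac_eq pl a a' \<and> ac_eq pl b b'"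
  by (erule ctxt_cl.cases) (auto elim: ac_root.cases intro: ac_eq_step)

lemma ac_eq_Pub: "ac_eq pl (Pub a) u \<Longrightarrow> \<exists>a'. u = Pub a' \<and> ac_eq pl a a'"
  unfolding ac_eq_def[of pl]
  by (induction rule: rtranclp_induct) (auto dest!: ac_step_Pub simp: ac_eq_def)
lemma ac_eq_Sign: "ac_eq pl (Sign a b) u \<Longrightarrow> \<exists>a' b'. u = Sign a' b' \<and> ac_eq pl a a' \<and> ac_eq pl b b'"
  unfolding ac_eq_def[of pl]
  by (induction rule: rtranclp_induct) (auto dest!: ac_step_Sign simp: ac_eq_def)
lemma ac_eq_Blind:
  "ac_eq pl (Blind a b) u \<Longrightarrow> \<exists>a' b'. u = Blind a' b' \<and> ac_eq pl a a' \<and> ac_eq pl b b'"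
  unfolding ac_eq_def[of pl]
  by (induction rule: rtranclp_induct) (auto dest!: ac_step_Blind simp: ac_eq_def)
lemma ac_eq_Pair: "ac_eq pl (Pair a b) u \<Longrightarrow> \<exists>a' b'. u = Pair a' b' \<and> ac_eq pl a a' \<and> ac_eq pl b b'"
  unfolding ac_eq_def[of pl]
  by (induction rule: rtranclp_induct) (auto dest!: ac_step_Pair simp: ac_eq_def)
lemma ac_eq_Enc: "ac_eq pl (Enc a b) u \<Longrightarrow> \<exists>a' b'. u = Enc a' b' \<and> ac_eq pl a a' \<and> ac_eq pl b b'"
  unfolding ac_eq_def[of pl]
  by (induction rule: rtranclp_induct) (auto dest!: ac_step_Enc simp: ac_eq_def)

lemma ac_eq_size:
  assumes "ac_eq pl s t" shows "size s = size t"
proof -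
  have step: "size a = size b" if "ctxt_cl (ac_root pl) a b" for a b
    using that by (induction rule: ctxt_cl.induct) (auto elim: ac_root.cases)
  from assms[unfolded ac_eq_def] show ?thesis
    by (induction rule: rtranclp_induct) (auto dest: step)
qed

lemma ac_eq_guarded:
  assumes "ac_eq pl s t" shows "guarded s = guarded t"
proof -
  have step: "guarded a = guarded b" if "ctxt_cl (ac_root pl) a b" for a b
    using that by (cases rule: ctxt_cl.cases) (auto elim: ac_root.cases)
  from assms[unfolded ac_eq_def] show ?thesis
    by (induction rule: rtranclp_induct) (auto dest: step)
qed

lemma ac_eq_wf_trm:
  assumes "ac_eq pl s t" "wf_trm ar s" shows "wf_trm ar t"
proof -
  have step: "wf_trm ar b" if "ctxt_cl (ac_root pl) a b" "wf_trm ar a" for a b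
    using that by (induction rule: ctxt_cl.induct) (auto simp: wf_trm_simps elim!: ac_root.cases)
  from assms[unfolded ac_eq_def] show ?thesis
    by (induction rule: rtranclp_induct) (auto dest: step)
qed

text \<open>AC steps only rearrange the E-layer above guarded subterms, so every guarded subterm
  of the result is AC-equal to one of the original term.\<close>

lemma ac_step_guarded_subterm:
  "ctxt_cl (ac_root pl) s t \<Longrightarrow> subterm x t \<Longrightarrow> guarded x \<Longrightarrow> \<exists>y. subterm y s \<and> ac_eq pl x y"
proof (induction arbitrary: x rule: ctxt_cl.induct)
  case (base s t)
  from base.hyps have "subterm x s" using base.prems
    by (cases rule: ac_root.cases; auto dest!: guarded_subterm_Fn; meson subterm.fn list.set_intros)
  then show ?case using ac_eq_refl by blast
next
  case (fn s t f xs ys)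
  then show ?case by (auto simp: subterm_Fn intro: subterm.fn)
qed (auto simp: subterm_simps;
     blast intro: subterm.intros ac_eq_step[OF ac_step_sym] ctxt_cl.intros)+

lemma ac_eq_guarded_subterm:
  assumes "ac_eq pl s t"
  shows "subterm x t \<Longrightarrow> guarded x \<Longrightarrow> \<exists>y. subterm y s \<and> ac_eq pl x y"
  using assms[unfolded ac_eq_def]
proof (induction arbitrary: x rule: rtranclp_induct)
  case (step y z)
  then obtain y' where "subterm y' y" "ac_eq pl x y'"
    using ac_step_guarded_subterm by blast
  with step show ?case by (metis ac_eq_guarded ac_eq_trans)
qed auto

lemma eqE_refl [simp]: "eqE pl R s s"
  by (simp add: eqE_def)

lemma eqE_sym: "eqE pl R s t \<Longrightarrow> eqE pl R t s"
  unfolding eqE_def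
  by (induction rule: rtranclp_induct) (auto intro: converse_rtranclp_into_rtranclp ac_step_sym)

lemma eqE_trans: "eqE pl R s t \<Longrightarrow> eqE pl R t u \<Longrightarrow> eqE pl R s u"
  unfolding eqE_def by auto

lemma ac_eq_eqE: "ac_eq pl s t \<Longrightarrow> eqE pl R s t"
  unfolding ac_eq_def eqE_def
    by (induction rule: rtranclp_induct) (auto intro: rtranclp.rtrancl_into_rtrancl)

lemma rstep_eqE: "rstep R s t \<Longrightarrow> eqE pl R s t"
  unfolding eqE_def by auto

lemma eqE_ctxt_fun:
  assumes "ctxt_fun F" shows "eqE pl R s t \<Longrightarrow> eqE pl R (F s) (F t)"
  unfolding eqE_def
  by (induction rule: rtranclp_induct)
     (auto intro: rtranclp.rtrancl_into_rtrancl ctxt_funD[OF assms] simp: rstep_def)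

lemma eqE_Fn: "list_all2 (eqE pl R) ts us \<Longrightarrow> eqE pl R (Fn f ts) (Fn f us)"
proof -
  have "eqE pl R (Fn f (xs @ ts)) (Fn f (xs @ us))" if "list_all2 (eqE pl R) ts us" for xs
    using that
  proof (induction ts us arbitrary: xs rule: list_all2_induct)
    case (Cons t ts u us)
    have "eqE pl R (Fn f (xs @ t # ts)) (Fn f (xs @ u # ts))"
      using eqE_ctxt_fun[OF ctxt_fun_Fn Cons(1)] .
    moreover have "eqE pl R (Fn f ((xs @ [u]) @ ts)) (Fn f ((xs @ [u]) @ us))" by (rule Cons(3))
    ultimately show ?case using eqE_trans by fastforce
  qed simp
  then show "list_all2 (eqE pl R) ts us \<Longrightarrow> ?thesis" by (metis append_Nil)
qed

lemma rstep_ctxt_fun: "ctxt_fun F \<Longrightarrow> rstep R s t \<Longrightarrow> rstep R (F s) (F t)"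
  unfolding rstep_def by (rule ctxt_funD)

lemma rstep_ac_ctxt_fun: "ctxt_fun F \<Longrightarrow> rstep_ac pl R s t \<Longrightarrow> rstep_ac pl R (F s) (F t)"
  unfolding rstep_ac_def using ac_eq_ctxt_fun rstep_ctxt_fun by metis

lemma nf_subterm: "nf ar pl R t \<Longrightarrow> subterm s t \<Longrightarrow> nf ar pl R s"
  unfolding nf_def by (metis subterm_ctxt_fun rstep_ac_ctxt_fun wf_trm_subterm)

lemma nf_ac_eq: "nf ar pl R t \<Longrightarrow> ac_eq pl t t' \<Longrightarrow> nf ar pl R t'"
  unfolding nf_def rstep_ac_def by (metis ac_eq_wf_trm ac_eq_sym ac_eq_trans)

lemma nf_rtranclp: "nf ar pl R t \<Longrightarrow> (rstep_ac pl R)\<^sup>*\<^sup>* t u \<Longrightarrow> u = t"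
  unfolding nf_def by (metis converse_rtranclpE)

lemma nf_not_rstep: "nf ar pl R t \<Longrightarrow> \<not> rstep R t u"
  unfolding nf_def rstep_ac_def by (metis ac_eq_refl)

lemma inst_guarded_subterm:
  "subterm g (inst \<sigma> r) \<Longrightarrow> guarded g \<Longrightarrow> \<exists>x\<in>evars r. subterm g (\<sigma> x)"
  by (induction r) (auto simp: subterm_Fn, blast)

lemma evars_subterm_inst: "x \<in> evars l \<Longrightarrow> subterm (\<sigma> x) (inst \<sigma> l)"
proof (induction l)
  case (EF f ts)
  then obtain t where "t \<in> set ts" "x \<in> evars t" by auto
  with EF.IH[OF this] show ?case by (auto intro!: subterm.fn[of "inst \<sigma> t"])
qed (simp add: subterm.refl)

definition guarded_subterms_nf ::
    "('f \<Rightarrow> nat) \<Rightarrow> 'f option \<Rightarrow> ('f etrm \<times> 'f etrm) set \<Rightarrow> 'f trm \<Rightarrow> bool" where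
  "guarded_subterms_nf ar pl R t \<longleftrightarrow> (\<forall>y. subterm y t \<longrightarrow> guarded y \<longrightarrow> nf ar pl R y)"

definition guarded_subterms_in :: "'f option \<Rightarrow> 'f trm set \<Rightarrow> 'f trm \<Rightarrow> bool" where
  "guarded_subterms_in pl G t \<longleftrightarrow> (\<forall>x. subterm x t \<longrightarrow> guarded x \<longrightarrow> (\<exists>g\<in>G. ac_eq pl x g))"

lemma guarded_subterms_nf_subterm:
  "guarded_subterms_nf ar pl R t \<Longrightarrow> subterm s t \<Longrightarrow> guarded_subterms_nf ar pl R s"
  unfolding guarded_subterms_nf_def using subterm_trans by blast

lemma nf_guarded_subterms_nf: "nf ar pl R t \<Longrightarrow> guarded_subterms_nf ar pl R t"
  unfolding guarded_subterms_nf_def using nf_subterm by blast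

lemma guarded_subterms_nf_not_rstep:
  "guarded_subterms_nf ar pl R s \<Longrightarrow> guarded s \<Longrightarrow> \<not> rstep R s t"
  unfolding guarded_subterms_nf_def using nf_not_rstep subterm.refl by blast

lemma guarded_subterms_nf_ac_eq:
  "ac_eq pl s t \<Longrightarrow> guarded_subterms_nf ar pl R s \<Longrightarrow> guarded_subterms_nf ar pl R t"
  unfolding guarded_subterms_nf_def
  by (metis ac_eq_guarded_subterm ac_eq_guarded ac_eq_sym nf_ac_eq)

lemma guarded_subterms_in_ac_eq:
  "ac_eq pl s t \<Longrightarrow> guarded_subterms_in pl G s \<Longrightarrow> guarded_subterms_in pl G t"
  unfolding guarded_subterms_in_def by (metis ac_eq_guarded_subterm ac_eq_guarded ac_eq_trans)

lemma guarded_subterms_in_nf: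
  "\<forall>g\<in>G. nf ar pl R g \<Longrightarrow> guarded_subterms_in pl G t \<Longrightarrow> guarded_subterms_nf ar pl R t"
  unfolding guarded_subterms_in_def guarded_subterms_nf_def by (metis ac_eq_sym nf_ac_eq)

lemma ectx_wf_trm: "C \<in> ectx ar \<Gamma> \<Longrightarrow> \<forall>t\<in>\<Gamma>. wf_trm ar t \<Longrightarrow> wf_trm ar C"
  by (induction rule: ectx.induct) (auto simp: wf_trm_simps)

lemma ectx_guarded_subterm: "C \<in> ectx ar \<Gamma> \<Longrightarrow> subterm x C \<Longrightarrow> guarded x \<Longrightarrow> \<exists>t\<in>\<Gamma>. subterm x t"
  by (induction arbitrary: x rule: ectx.induct) (auto dest: guarded_subterm_Fn)

lemma ectx_mono: "C \<in> ectx ar \<Gamma> \<Longrightarrow> \<Gamma> \<subseteq> \<Gamma>' \<Longrightarrow> C \<in> ectx ar \<Gamma>'"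
  by (induction rule: ectx.induct) (auto intro: ectx.intros)

lemma ectx_insert_eqE:
  assumes "eqE pl R A D" "D \<in> ectx ar \<Gamma>"
  shows "C \<in> ectx ar (insert A \<Gamma>) \<Longrightarrow> \<exists>C'\<in>ectx ar \<Gamma>. eqE pl R C C'"
proof (induction rule: ectx.induct)
  case (hole M)
  then show ?case using assms eqE_refl ectx.hole by (cases "M = A") blast+
next
  case (fn ts f)
  have "\<forall>t\<in>set ts. \<exists>u. u \<in> ectx ar \<Gamma> \<and> eqE pl R t u" using fn.IH by blast
  then have "\<exists>us. list_all2 (\<lambda>t u. u \<in> ectx ar \<Gamma> \<and> eqE pl R t u) ts us"
    by (induction ts) (auto simp: list_all2_Cons1)
  then obtain us where us: "list_all2 (\<lambda>t u. u \<in> ectx ar \<Gamma> \<and> eqE pl R t u) ts us" ..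
  have "Fn f us \<in> ectx ar \<Gamma>"
    using us fn.hyps by (auto simp: list_all2_conv_all_nth in_set_conv_nth intro!: ectx.fn)
  moreover have "eqE pl R (Fn f ts) (Fn f us)"
    using us by (auto intro: eqE_Fn list_all2_mono)
  ultimately show ?case by blast
qed

section \<open>Replacing a guarded term by an E-context\<close>

text \<open>Comparing with A modulo AC, rather than syntactically, is what makes the replacement
  compatible with AC steps.\<close>

fun replace_ac :: "'f option \<Rightarrow> 'f trm \<Rightarrow> 'f trm \<Rightarrow> 'f trm \<Rightarrow> 'f trm" where
  "replace_ac pl A X (Fn f ts) = Fn f (map (replace_ac pl A X) ts)"
| "replace_ac pl A X (Name n) = (if ac_eq pl (Name n) A then X else Name n)"
| "replace_ac pl A X (Var n) = (if ac_eq pl (Var n) A then X else Var n)"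
| "replace_ac pl A X (Pub s) = (if ac_eq pl (Pub s) A then X else Pub (replace_ac pl A X s))"
| "replace_ac pl A X (Sign s u) =
    (if ac_eq pl (Sign s u) A then X else Sign (replace_ac pl A X s) (replace_ac pl A X u))"
| "replace_ac pl A X (Blind s u) =
    (if ac_eq pl (Blind s u) A then X else Blind (replace_ac pl A X s) (replace_ac pl A X u))"
| "replace_ac pl A X (Pair s u) =
    (if ac_eq pl (Pair s u) A then X else Pair (replace_ac pl A X s) (replace_ac pl A X u))"
| "replace_ac pl A X (Enc s u) =
    (if ac_eq pl (Enc s u) A then X else Enc (replace_ac pl A X s) (replace_ac pl A X u))"

lemma replace_ac_inst: "replace_ac pl A X (inst \<sigma> l) = inst (\<lambda>x. replace_ac pl A X (\<sigma> x)) l"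
  by (induction l) auto

lemma replace_ac_id:
  "(\<forall>x. subterm x T \<longrightarrow> guarded x \<longrightarrow> \<not> ac_eq pl x A) \<Longrightarrow> replace_ac pl A X T = T"
proof (induction T)
  case (Fn f ts)
  then have "\<forall>t\<in>set ts. replace_ac pl A X t = t" by (meson subterm.fn)
  then show ?case by (simp add: map_idI)
qed (auto simp: subterm_simps)

lemma replace_ac_guarded_self: "guarded A \<Longrightarrow> replace_ac pl A X A = X"
  by (cases A) auto

lemma replace_ac_ectx:
  "C \<in> ectx ar (insert A \<Gamma>) \<Longrightarrow> guarded A \<Longrightarrow> X \<in> ectx ar \<Gamma> \<Longrightarrow>
   \<forall>t\<in>\<Gamma>. replace_ac pl A X t = t \<Longrightarrow> replace_ac pl A X C \<in> ectx ar \<Gamma>"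
proof (induction rule: ectx.induct)
  case (hole M)
  then show ?case by (metis ectx.hole insertE replace_ac_guarded_self)
qed (auto intro!: ectx.fn)

lemma ac_step_ac_eq_iff: "ctxt_cl (ac_root pl) s t \<Longrightarrow> ac_eq pl s A \<longleftrightarrow> ac_eq pl t A"
  by (meson ac_eq_step ac_step_sym ac_eq_trans)

lemma replace_ac_ac_step:
  "ctxt_cl (ac_root pl) s t \<Longrightarrow> eqE pl R (replace_ac pl A X s) (replace_ac pl A X t)"
proof (induction rule: ctxt_cl.induct)
  case (base s t)
  then show ?case
    by (cases rule: ac_root.cases) (auto intro!: ac_eq_eqE ac_eq_step ctxt_cl.base ac_root.intros)
next
  case (fn s t f xs ys)
  then show ?case using eqE_ctxt_fun[OF ctxt_fun_Fn] by simp
qed (auto simp: ctxt_cl.intros(2-10)[THEN ac_step_ac_eq_iff]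
          intro: ctxt_fun_constructors[THEN eqE_ctxt_fun])

lemma replace_ac_ac_eq: "ac_eq pl s t \<Longrightarrow> eqE pl R (replace_ac pl A X s) (replace_ac pl A X t)"
  unfolding ac_eq_def
  by (induction rule: rtranclp_induct) (auto dest: replace_ac_ac_step[where R = R] intro: eqE_trans)

lemma replace_ac_rstep:
  assumes "rstep R s t"
  shows "guarded_subterms_nf ar pl R s \<Longrightarrow> eqE pl R (replace_ac pl A X s) (replace_ac pl A X t)"
  using assms[unfolded rstep_def]
proof (induction rule: ctxt_cl.induct)
  case (base s t)
  then show ?case
    by (cases rule: r_root.cases)
       (auto simp: replace_ac_inst rstep_def intro!: rstep_eqE ctxt_cl.base r_root.intros)
next
  case (fn s t f xs ys)
  have "subterm s (Fn f (xs @ s # ys))" by (auto intro: subterm.fn subterm.refl)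
  with fn have "eqE pl R (replace_ac pl A X s) (replace_ac pl A X t)"
    using guarded_subterms_nf_subterm by blast
  then show ?case using eqE_ctxt_fun[OF ctxt_fun_Fn] by simp
qed (auto dest!: guarded_subterms_nf_not_rstep simp: rstep_def intro: ctxt_cl.intros)

context
  fixes R :: "('f etrm \<times> 'f etrm) set"
  assumes rule_vars: "\<And>l r. (l, r) \<in> R \<Longrightarrow> evars r \<subseteq> evars l"
begin

text \<open>When all guarded subterms are in normal form, a rewrite step happens inside the
  E-layer; as right-hand sides only use variables of the left-hand side, it creates no new
  guarded subterm.\<close>

lemma rstep_guarded_subterm:
  assumes "rstep R s t"
  shows "guarded_subterms_nf ar pl R s \<Longrightarrow> subterm x t \<Longrightarrow> guarded x \<Longrightarrow> subterm x s"
  using assms[unfolded rstep_def]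
proof (induction arbitrary: x rule: ctxt_cl.induct)
  case (base s t)
  from base.hyps show ?case
  proof (cases rule: r_root.cases)
    case (1 l r \<sigma>)
    with base.prems obtain y where "y \<in> evars r" "subterm x (\<sigma> y)"
      using inst_guarded_subterm by blast
    with 1 show ?thesis using rule_vars evars_subterm_inst subterm_trans by blast
  qed
next
  case (fn s t f xs ys)
  from guarded_subterm_Fn[OF fn.prems(2,3)] obtain u where u: "u \<in> set (xs @ t # ys)" "subterm x u"
    by blast
  have "subterm s (Fn f (xs @ s # ys))" by (auto intro: subterm.fn subterm.refl)
  then have "guarded_subterms_nf ar pl R s"
    using fn.prems(1) guarded_subterms_nf_subterm by blast
  with fn.IH fn.prems u show ?case by (cases "u = t") (auto intro: subterm.fn)
qed (auto dest!: guarded_subterms_nf_not_rstep simp: rstep_def intro: ctxt_cl.intros)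


lemma guarded_subterms_nf_rstep:
  "rstep R s t \<Longrightarrow> guarded_subterms_nf ar pl R s \<Longrightarrow> guarded_subterms_nf ar pl R t"
  using rstep_guarded_subterm unfolding guarded_subterms_nf_def by blast

lemma guarded_subterms_nf_rtranclp:
  "(rstep_ac pl R)\<^sup>*\<^sup>* s t \<Longrightarrow> guarded_subterms_nf ar pl R s \<Longrightarrow> guarded_subterms_nf ar pl R t"
  by (induction rule: rtranclp_induct)
     (auto simp: rstep_ac_def dest: guarded_subterms_nf_ac_eq guarded_subterms_nf_rstep)

lemma guarded_subterms_in_rtranclp:
  assumes "\<forall>g\<in>G. nf ar pl R g"
  shows "(rstep_ac pl R)\<^sup>*\<^sup>* s t \<Longrightarrow> guarded_subterms_in pl G s \<Longrightarrow> guarded_subterms_in pl G t"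
proof (induction rule: rtranclp_induct)
  case (step t u)
  then obtain t' u' where tu: "ac_eq pl t t'" "rstep R t' u'" "ac_eq pl u' u"
    unfolding rstep_ac_def by blast
  from step tu have in_t': "guarded_subterms_in pl G t'"
    using guarded_subterms_in_ac_eq by blast
  with assms have "guarded_subterms_nf ar pl R t'"
    using guarded_subterms_in_nf by blast
  with in_t' tu(2) have "guarded_subterms_in pl G u'"
    using rstep_guarded_subterm unfolding guarded_subterms_in_def by meson
  with tu(3) show ?case using guarded_subterms_in_ac_eq by blast
qed simp

lemma replace_ac_rtranclp:
  "(rstep_ac pl R)\<^sup>*\<^sup>* s t \<Longrightarrow> guarded_subterms_nf ar pl R s \<Longrightarrow>
   eqE pl R (replace_ac pl A X s) (replace_ac pl A X t)"
proof (induction rule: rtranclp_induct)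
  case (step t u)
  then obtain t' u' where tu: "ac_eq pl t t'" "rstep R t' u'" "ac_eq pl u' u"
    unfolding rstep_ac_def by blast
  from step have "guarded_subterms_nf ar pl R t" using guarded_subterms_nf_rtranclp by blast
  with tu have "eqE pl R (replace_ac pl A X t') (replace_ac pl A X u')"
    using replace_ac_rstep guarded_subterms_nf_ac_eq by blast
  with tu step.IH step.prems show ?case
    using replace_ac_ac_eq eqE_trans by meson
qed simp

end

definition hyps_ok ::
    "('f \<Rightarrow> nat) \<Rightarrow> 'f option \<Rightarrow> ('f etrm \<times> 'f etrm) set \<Rightarrow> 'f trm set \<Rightarrow> bool" where
  "hyps_ok ar pl R \<Gamma> \<longleftrightarrow> finite \<Gamma> \<and> (\<forall>t\<in>\<Gamma>. nf ar pl R t)"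

lemma seq_ok_iff: "seq_ok ar pl R \<Gamma> M \<longleftrightarrow> hyps_ok ar pl R \<Gamma> \<and> nf ar pl R M"
  unfolding seq_ok_def hyps_ok_def by blast

lemma hyps_ok_insert: "hyps_ok ar pl R \<Gamma> \<Longrightarrow> nf ar pl R t \<Longrightarrow> hyps_ok ar pl R (insert t \<Gamma>)"
  unfolding hyps_ok_def by auto

lemma hyps_ok_nf: "hyps_ok ar pl R \<Gamma> \<Longrightarrow> t \<in> \<Gamma> \<Longrightarrow> nf ar pl R t"
  unfolding hyps_ok_def by blast

lemma binary_constructor:
  assumes "c \<in> {Pair, Enc, Sign, Blind}"
  shows "guarded (c a b)" "size a < size (c a b)" "size b < size (c a b)"
    and "subterm a (c a b)" "subterm b (c a b)"
    and "nf ar pl R (c a b) \<Longrightarrow> nf ar pl R a \<and> nf ar pl R b"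
    and "ac_eq pl (c a b) u \<Longrightarrow> \<exists>a' b'. u = c a' b' \<and> ac_eq pl a a' \<and> ac_eq pl b b'"
  using assms
  by (auto intro: subterm.intros dest: ac_eq_Pair ac_eq_Enc ac_eq_Sign ac_eq_Blind)
     (meson nf_subterm subterm.intros)+

lemma provR_seq_ok: "provR ar pl R \<Gamma> M \<Longrightarrow> seq_ok ar pl R \<Gamma> M"
  by (induction rule: provR.induct) auto

lemma provL_seq_ok: "provL ar pl R \<Gamma> M \<Longrightarrow> seq_ok ar pl R \<Gamma> M"
  by (induction rule: provL.induct) auto

lemma provR_mono:
  "provR ar pl R \<Gamma> M \<Longrightarrow> \<Gamma> \<subseteq> \<Gamma>' \<Longrightarrow> hyps_ok ar pl R \<Gamma>' \<Longrightarrow> provR ar pl R \<Gamma>' M"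
proof (induction rule: provR.induct)
  case (idR \<Gamma> M C)
  then show ?case using ectx_mono provR.idR by (metis seq_ok_iff)
qed (auto simp: seq_ok_iff intro: provR.intros)

lemma provR_ac_eq: "provR ar pl R \<Gamma> M \<Longrightarrow> ac_eq pl M M' \<Longrightarrow> provR ar pl R \<Gamma> M'"
proof (induction arbitrary: M' rule: provR.induct)
  case (idR \<Gamma> M C)
  then show ?case by (metis ac_eq_eqE eqE_sym eqE_trans nf_ac_eq provR.idR seq_ok_def)
next
  case (pR \<Gamma> M N)
  then obtain a b where "M' = Pair a b" "ac_eq pl M a" "ac_eq pl N b" using ac_eq_Pair by blast
  with pR show ?case by (metis nf_ac_eq provR.pR seq_ok_def)
next
  case (eR \<Gamma> M N)
  then obtain a b where "M' = Enc a b" "ac_eq pl M a" "ac_eq pl N b" using ac_eq_Enc by blast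
  with eR show ?case by (metis nf_ac_eq provR.eR seq_ok_def)
next
  case (signR \<Gamma> M N)
  then obtain a b where "M' = Sign a b" "ac_eq pl M a" "ac_eq pl N b" using ac_eq_Sign by blast
  with signR show ?case by (metis nf_ac_eq provR.signR seq_ok_def)
next
  case (blindR \<Gamma> M N)
  then obtain a b where "M' = Blind a b" "ac_eq pl M a" "ac_eq pl N b" using ac_eq_Blind by blast
  with blindR show ?case by (metis nf_ac_eq provR.blindR seq_ok_def)
qed

lemma provR_ac_hyp:
  "hyps_ok ar pl R \<Gamma> \<Longrightarrow> nf ar pl R x \<Longrightarrow> y \<in> \<Gamma> \<Longrightarrow> ac_eq pl x y \<Longrightarrow> provR ar pl R \<Gamma> x"
  by (rule provR.idR[of ar pl R \<Gamma> x y]) (auto simp: seq_ok_iff intro: ectx.hole ac_eq_eqE)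

lemma provR_hyp: "hyps_ok ar pl R \<Gamma> \<Longrightarrow> x \<in> \<Gamma> \<Longrightarrow> provR ar pl R \<Gamma> x"
  using provR_ac_hyp hyps_ok_nf ac_eq_refl by blast

lemma provR_replace_hyp:
  "provR ar pl R \<Delta> B \<Longrightarrow> \<Delta> \<subseteq> insert A \<Gamma> \<Longrightarrow> eqE pl R A D \<Longrightarrow> D \<in> ectx ar \<Gamma> \<Longrightarrow>
   hyps_ok ar pl R \<Gamma> \<Longrightarrow> provR ar pl R \<Gamma> B"
proof (induction rule: provR.induct)
  case (idR \<Delta> M C)
  then have "C \<in> ectx ar (insert A \<Gamma>)" using ectx_mono by blast
  then obtain C' where "C' \<in> ectx ar \<Gamma>" "eqE pl R C C'" using ectx_insert_eqE idR.prems by blast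
  then show ?case using idR by (metis eqE_trans provR.idR seq_ok_iff)
qed (auto simp: seq_ok_iff intro: provR.intros)

lemma provR_guarded_or_ectx: "provR ar pl R \<Gamma> A \<Longrightarrow> guarded A \<or> (\<exists>C\<in>ectx ar \<Gamma>. eqE pl R A C)"
  by (cases rule: provR.cases) auto

lemma provR_ectx_nonempty: "provR ar pl R \<Gamma> A \<Longrightarrow> \<exists>C. C \<in> ectx ar \<Gamma>"
  by (induction rule: provR.induct) auto

lemma provR_Pub_ectx: "provR ar pl R \<Gamma> (Pub M) \<Longrightarrow> \<exists>C\<in>ectx ar \<Gamma>. eqE pl R (Pub M) C"
  by (cases rule: provR.cases) auto

lemma provR_args_or_ectx:
  assumes "c \<in> {Pair, Enc, Sign, Blind}" "provR ar pl R \<Gamma> (c M N)"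
  shows "(provR ar pl R \<Gamma> M \<and> provR ar pl R \<Gamma> N) \<or> (\<exists>C\<in>ectx ar \<Gamma>. eqE pl R (c M N) C)"
  using assms by (auto elim: provR.cases)

lemma provL_decompose_left:
  assumes "c \<in> {Pair, Enc, Blind}" "c M K \<in> \<Gamma>" "seq_ok ar pl R \<Gamma> T"
    and "c = Pair \<or> provR ar pl R \<Gamma> K" "provL ar pl R (insert M (insert K \<Gamma>)) T"
  shows "provL ar pl R \<Gamma> T"
  using assms provL.lp[of ar pl R M K \<Gamma> T] provL.le[of ar pl R M K \<Gamma> T]
    provL.blind1[of ar pl R M K \<Gamma> T]
  by (auto simp: insert_absorb)

lemma provL_sign_left:
  "Sign M K \<in> \<Gamma> \<Longrightarrow> Pub L \<in> \<Gamma> \<Longrightarrow> ac_eq pl K L \<Longrightarrow> seq_ok ar pl R \<Gamma> T \<Longrightarrow>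
   provL ar pl R (insert M \<Gamma>) T \<Longrightarrow> provL ar pl R \<Gamma> T"
  using provL.sign[of ar pl R M K L \<Gamma> T] by (simp add: insert_absorb)

lemma provL_unblind_left:
  "Sign (Blind M Rr) K \<in> \<Gamma> \<Longrightarrow> seq_ok ar pl R \<Gamma> T \<Longrightarrow> provR ar pl R \<Gamma> Rr \<Longrightarrow>
   provL ar pl R (insert (Sign M K) (insert Rr \<Gamma>)) T \<Longrightarrow> provL ar pl R \<Gamma> T"
  using provL.blind2[of ar pl R M Rr K \<Gamma> T] by (simp add: insert_absorb)

lemma provL_guarded_subterm:
  "provR ar pl R \<Gamma> A \<Longrightarrow> guarded A \<Longrightarrow> \<exists>t\<in>insert T \<Gamma>. subterm A t \<Longrightarrow>
   provL ar pl R (insert A \<Gamma>) T \<Longrightarrow> provL ar pl R \<Gamma> T"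
  by (meson provL.ls provL_seq_ok provR_seq_ok seq_ok_iff)

lemma hyps_ok_union: "hyps_ok ar pl R \<Gamma> \<Longrightarrow> hyps_ok ar pl R \<Delta> \<Longrightarrow> hyps_ok ar pl R (\<Gamma> \<union> \<Delta>)"
  unfolding hyps_ok_def by blast

lemma provL_mono:
  "provL ar pl R \<Gamma> T \<Longrightarrow> \<Gamma> \<subseteq> \<Gamma>' \<Longrightarrow> hyps_ok ar pl R \<Gamma>' \<Longrightarrow> provL ar pl R \<Gamma>' T"
proof (induction arbitrary: \<Gamma>' rule: provL.induct)
  case (r \<Gamma> M)
  then show ?case by (metis provR_mono provL.r seq_ok_iff)
next
  case (lp M N \<Gamma> T)
  let ?\<Delta> = "insert (Pair M N) (insert M (insert N \<Gamma>))"
  have "hyps_ok ar pl R (?\<Delta> \<union> \<Gamma>')"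
    using provL_seq_ok[OF lp.hyps(2)] lp.prems(2)
      by (intro hyps_ok_union) (simp_all add: seq_ok_iff)
  then have "provL ar pl R (?\<Delta> \<union> \<Gamma>') T" by (intro lp.IH) auto
  moreover have "?\<Delta> \<union> \<Gamma>' = insert M (insert N \<Gamma>')" using lp.prems(1) by blast
  moreover have "seq_ok ar pl R \<Gamma>' T" using lp.hyps(1) lp.prems(2) by (simp add: seq_ok_iff)
  ultimately show ?case
    using lp.prems(1) provL_decompose_left[of Pair] by (metis insert_subset insertCI)
next
  case (le M K \<Gamma> N)
  let ?\<Delta> = "insert (Enc M K) (insert M (insert K \<Gamma>))"
  have "hyps_ok ar pl R (?\<Delta> \<union> \<Gamma>')"
    using provL_seq_ok[OF le.hyps(3)] le.prems(2)
      by (intro hyps_ok_union) (simp_all add: seq_ok_iff)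
  then have "provL ar pl R (?\<Delta> \<union> \<Gamma>') N" by (intro le.IH) auto
  moreover have "?\<Delta> \<union> \<Gamma>' = insert M (insert K \<Gamma>')" using le.prems(1) by blast
  moreover have "seq_ok ar pl R \<Gamma>' N" using le.hyps(1) le.prems(2) by (simp add: seq_ok_iff)
  moreover have "provR ar pl R \<Gamma>' K" using provR_mono[OF le.hyps(2) le.prems] .
  ultimately show ?case
    using le.prems(1) provL_decompose_left[of Enc] by (metis insertCI insert_subset)
next
  case (sign M K L \<Gamma> N)
  let ?\<Delta> = "insert (Sign M K) (insert (Pub L) (insert M \<Gamma>))"
  have "hyps_ok ar pl R (?\<Delta> \<union> \<Gamma>')"
    using provL_seq_ok[OF sign.hyps(3)] sign.prems(2)
      by (intro hyps_ok_union) (simp_all add: seq_ok_iff)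
  then have "provL ar pl R (?\<Delta> \<union> \<Gamma>') N" by (intro sign.IH) auto
  moreover have "?\<Delta> \<union> \<Gamma>' = insert M \<Gamma>'" using sign.prems(1) by blast
  moreover have "seq_ok ar pl R \<Gamma>' N" using sign.hyps(1) sign.prems(2) by (simp add: seq_ok_iff)
  ultimately show ?case using sign.prems(1) sign.hyps(2) provL_sign_left by (metis insert_subset)
next
  case (blind1 M K \<Gamma> N)
  let ?\<Delta> = "insert (Blind M K) (insert M (insert K \<Gamma>))"
  have "hyps_ok ar pl R (?\<Delta> \<union> \<Gamma>')"
    using provL_seq_ok[OF blind1.hyps(3)] blind1.prems(2)
    by (intro hyps_ok_union) (simp_all add: seq_ok_iff)
  then have "provL ar pl R (?\<Delta> \<union> \<Gamma>') N" by (intro blind1.IH) auto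
  moreover have "?\<Delta> \<union> \<Gamma>' = insert M (insert K \<Gamma>')" using blind1.prems(1) by blast
  moreover have "seq_ok ar pl R \<Gamma>' N" using blind1.hyps(1) blind1.prems(2) by (simp add: seq_ok_iff)
  moreover have "provR ar pl R \<Gamma>' K" using provR_mono[OF blind1.hyps(2) blind1.prems] .
  ultimately show ?case
    using blind1.prems(1) provL_decompose_left[of Blind] by (metis insertCI insert_subset)
next
  case (blind2 M Rr K \<Gamma> N)
  let ?\<Delta> = "insert (Sign (Blind M Rr) K) (insert (Sign M K) (insert Rr \<Gamma>))"
  have "hyps_ok ar pl R (?\<Delta> \<union> \<Gamma>')"
    using provL_seq_ok[OF blind2.hyps(3)] blind2.prems(2)
    by (intro hyps_ok_union) (simp_all add: seq_ok_iff)
  then have "provL ar pl R (?\<Delta> \<union> \<Gamma>') N" by (intro blind2.IH) auto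
  moreover have "?\<Delta> \<union> \<Gamma>' = insert (Sign M K) (insert Rr \<Gamma>')" using blind2.prems(1) by blast
  moreover have "seq_ok ar pl R \<Gamma>' N" using blind2.hyps(1) blind2.prems(2) by (simp add: seq_ok_iff)
  moreover have "provR ar pl R \<Gamma>' Rr" using provR_mono[OF blind2.hyps(2) blind2.prems] .
  ultimately show ?case using blind2.prems(1) provL_unblind_left by (metis insert_subset)
next
  case (ls \<Gamma> M A)
  have "hyps_ok ar pl R (insert A \<Gamma>')"
    using provR_seq_ok[OF ls.hyps(4)] ls.prems(2) by (simp add: seq_ok_iff hyps_ok_insert)
  then have "provL ar pl R (insert A \<Gamma>') M" using ls.prems(1) by (intro ls.IH) auto
  moreover have "provR ar pl R \<Gamma>' A" using provR_mono[OF ls.hyps(4) ls.prems] .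
  moreover have "\<exists>t\<in>insert M \<Gamma>'. subterm A t" using ls.hyps(3) ls.prems(1) by blast
  ultimately show ?case using ls.hyps(2) provL_guarded_subterm by blast
qed

section \<open>Cut elimination for L\<close>

context
  fixes ar :: "'f \<Rightarrow> nat" and pl :: "'f option" and R :: "('f etrm \<times> 'f etrm) set"
  assumes rule_vars: "\<And>l r. (l, r) \<in> R \<Longrightarrow> evars r \<subseteq> evars l"
    and confluent: "confluent_ac ar pl R"
begin

text \<open>Normalising C, its guarded subterms stay AC-equal to guarded subterms of \<Gamma>;
  by confluence the normal form is AC-equal to A itself.\<close>

lemma guarded_eqE_ectx_ac_subterm:
  assumes nf_\<Gamma>: "\<forall>t\<in>\<Gamma>. nf ar pl R t" and nf_A: "nf ar pl R A" and "guarded A"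
    and C: "C \<in> ectx ar \<Gamma>" and "eqE pl R A C"
  shows "\<exists>t\<in>\<Gamma>. \<exists>g. subterm g t \<and> guarded g \<and> ac_eq pl A g"
proof -
  define G where "G = {g. guarded g \<and> (\<exists>t\<in>\<Gamma>. subterm g t)}"
  have nf_G: "\<forall>g\<in>G. nf ar pl R g" using nf_\<Gamma> nf_subterm unfolding G_def by blast
  have "wf_trm ar C" using ectx_wf_trm[OF C] nf_\<Gamma> unfolding nf_def by blast
  moreover have "wf_trm ar A" using nf_A unfolding nf_def by blast
  ultimately obtain A' C'
    where "(rstep_ac pl R)\<^sup>*\<^sup>* A A'" "(rstep_ac pl R)\<^sup>*\<^sup>* C C'" "ac_eq pl A' C'"
    using confluent \<open>eqE pl R A C\<close> unfolding confluent_ac_def by blast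
  moreover have "guarded_subterms_in pl G C"
    unfolding guarded_subterms_in_def G_def using ectx_guarded_subterm[OF C] ac_eq_refl by blast
  ultimately have "guarded_subterms_in pl G A"
    using guarded_subterms_in_rtranclp[OF rule_vars nf_G] guarded_subterms_in_ac_eq ac_eq_sym
      nf_rtranclp[OF nf_A] by metis
  then show ?thesis using \<open>guarded A\<close> subterm.refl unfolding guarded_subterms_in_def G_def by blast
qed

lemma replace_ac_eqE:
  assumes "wf_trm ar s" "wf_trm ar t"
    and "guarded_subterms_nf ar pl R s" "guarded_subterms_nf ar pl R t"
    and "eqE pl R s t"
  shows "eqE pl R (replace_ac pl A X s) (replace_ac pl A X t)"
proof -
  obtain s' t' where st: "(rstep_ac pl R)\<^sup>*\<^sup>* s s'" "(rstep_ac pl R)\<^sup>*\<^sup>* t t'" "ac_eq pl s' t'"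
    using confluent assms unfolding confluent_ac_def by blast
  show ?thesis
    using replace_ac_rtranclp[OF rule_vars st(1) assms(3)] replace_ac_ac_eq[OF st(3)]
      replace_ac_rtranclp[OF rule_vars st(2) assms(4)]
    by (metis eqE_trans eqE_sym)
qed

lemma subterm_insert_mono_disj:
  assumes "P \<or> (\<exists>g. Q g \<and> Q' g \<and> (\<exists>t\<in>insert M \<Gamma>. subterm g t))"
    and "P' \<or> (\<exists>g. Q g \<and> Q' g \<and> (\<exists>t\<in>insert N \<Gamma>. subterm g t))"
    and "subterm M X" "subterm N X"
  shows "(P \<and> P') \<or> (\<exists>g. Q g \<and> Q' g \<and> (\<exists>t\<in>insert X \<Gamma>. subterm g t))"
  using assms subterm_trans by blast

abbreviation (input) provesR (infix "\<Vdash>" 50) where "\<Gamma> \<Vdash> M \<equiv> provR ar pl R \<Gamma> M"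
abbreviation (input) provesL (infix "\<turnstile>" 50) where "\<Gamma> \<turnstile> M \<equiv> provL ar pl R \<Gamma> M"

text \<open>Either A is E-equal to a context over \<Gamma>, which then replaces it in the (id) leaves,
  or A is guarded; if moreover no guarded subterm of B or \<Gamma> is AC-equal to A, replacing
  A by a fixed context over \<Gamma> throughout an (id) leaf yields a leaf over \<Gamma> alone.\<close>

lemma provR_cut:
  assumes A: "\<Gamma> \<Vdash> A"
  shows "\<Delta> \<Vdash> B \<Longrightarrow> \<Delta> \<subseteq> insert A \<Gamma> \<Longrightarrow>
    \<Gamma> \<Vdash> B \<or> (\<exists>g. guarded g \<and> ac_eq pl g A \<and> (\<exists>t\<in>insert B \<Gamma>. subterm g t))"
proof (induction rule: provR.induct)
  case (idR \<Delta> B C)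
  have ok_\<Gamma>: "hyps_ok ar pl R \<Gamma>" and nf_A: "nf ar pl R A"
    using provR_seq_ok[OF A] seq_ok_iff by blast+
  have nf_B: "nf ar pl R B" using idR(1) seq_ok_iff by blast
  then have B_ok: "seq_ok ar pl R \<Gamma> B" using ok_\<Gamma> seq_ok_iff by blast
  have C: "C \<in> ectx ar (insert A \<Gamma>)" using ectx_mono idR by blast
  consider (ectx) D where "D \<in> ectx ar \<Gamma>" "eqE pl R A D"
    | (alien) "guarded A" "\<forall>g. guarded g \<longrightarrow> ac_eq pl g A \<longrightarrow> \<not> (\<exists>t\<in>insert B \<Gamma>. subterm g t)"
    | (found) "\<exists>g. guarded g \<and> ac_eq pl g A \<and> (\<exists>t\<in>insert B \<Gamma>. subterm g t)"
    using provR_guarded_or_ectx[OF A] by blast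
  then show ?case
  proof cases
    case ectx
    then obtain C' where "C' \<in> ectx ar \<Gamma>" "eqE pl R C C'" using ectx_insert_eqE C by blast
    then show ?thesis using provR.idR[OF B_ok] idR(3) eqE_trans by blast
  next
    case alien
    obtain X where X: "X \<in> ectx ar \<Gamma>" using provR_ectx_nonempty[OF A] by blast
    have "replace_ac pl A X t = t" if "t \<in> insert B \<Gamma>" for t
      using alien that by (meson ac_eq_sym replace_ac_id)
    then have fix_B: "replace_ac pl A X B = B" and fix_\<Gamma>: "\<forall>t\<in>\<Gamma>. replace_ac pl A X t = t"
      by auto
    have nf_A\<Gamma>: "\<forall>t\<in>insert A \<Gamma>. nf ar pl R t" using ok_\<Gamma> nf_A hyps_ok_nf by blast
    then have "guarded_subterms_nf ar pl R C"
      unfolding guarded_subterms_nf_def using ectx_guarded_subterm[OF C] nf_subterm by blast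
    moreover have "wf_trm ar C" using ectx_wf_trm[OF C] nf_A\<Gamma> unfolding nf_def by blast
    ultimately have "eqE pl R B (replace_ac pl A X C)"
      using replace_ac_eqE[OF _ _ nf_guarded_subterms_nf[OF nf_B] _ idR(3)] nf_B fix_B
      unfolding nf_def by metis
    moreover have "replace_ac pl A X C \<in> ectx ar \<Gamma>" using replace_ac_ectx[OF C alien(1) X fix_\<Gamma>] .
    ultimately show ?thesis using provR.idR[OF B_ok] by blast
  qed blast
next
  case (pR \<Delta> M N)
  have "seq_ok ar pl R \<Gamma> (Pair M N)" using pR.hyps(1) provR_seq_ok[OF A] by (simp add: seq_ok_iff)
  then show ?case
    using subterm_insert_mono_disj[OF pR.IH[OF pR.prems] subterm.pair1[OF subterm.refl]
        subterm.pair2[OF subterm.refl]] provR.pR by blast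
next
  case (eR \<Delta> M N)
  have "seq_ok ar pl R \<Gamma> (Enc M N)" using eR.hyps(1) provR_seq_ok[OF A] by (simp add: seq_ok_iff)
  then show ?case
    using subterm_insert_mono_disj[OF eR.IH[OF eR.prems] subterm.enc1[OF subterm.refl]
        subterm.enc2[OF subterm.refl]] provR.eR by blast
next
  case (signR \<Delta> M N)
  have "seq_ok ar pl R \<Gamma> (Sign M N)"
    using signR.hyps(1) provR_seq_ok[OF A] by (simp add: seq_ok_iff)
  then show ?case
    using subterm_insert_mono_disj[OF signR.IH[OF signR.prems] subterm.sign1[OF subterm.refl]
        subterm.sign2[OF subterm.refl]] provR.signR by blast
next
  case (blindR \<Delta> M N)
  have "seq_ok ar pl R \<Gamma> (Blind M N)"
    using blindR.hyps(1) provR_seq_ok[OF A] by (simp add: seq_ok_iff)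
  then show ?case
    using subterm_insert_mono_disj[OF blindR.IH[OF blindR.prems] subterm.blind1[OF subterm.refl]
        subterm.blind2[OF subterm.refl]] provR.blindR by blast
qed

lemma provR_cut_or_guarded:
  assumes A: "\<Gamma> \<Vdash> A" and B: "\<Delta> \<Vdash> B" and sub: "\<Delta> \<subseteq> insert A \<Gamma>"
  shows "\<Gamma> \<Vdash> B \<or>
    (\<exists>g. guarded g \<and> ac_eq pl g A \<and> (\<exists>t\<in>insert B \<Gamma>. subterm g t) \<and> \<Gamma> \<Vdash> g \<and> insert g \<Gamma> \<Vdash> B)"
proof -
  have ok_\<Gamma>: "hyps_ok ar pl R \<Gamma>" using provR_seq_ok[OF A] seq_ok_iff by blast
  have nf_B: "nf ar pl R B" using provR_seq_ok[OF B] seq_ok_iff by blast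
  from provR_cut[OF A B sub] show ?thesis
  proof (elim disjE exE conjE)
    fix g assume g: "guarded g" "ac_eq pl g A" "\<exists>t\<in>insert B \<Gamma>. subterm g t"
    have nf_g: "nf ar pl R g" using g(3) ok_\<Gamma> nf_B nf_subterm hyps_ok_nf by blast
    have "\<Gamma> \<Vdash> g" using provR_ac_eq[OF A ac_eq_sym[OF g(2)]] .
    moreover have "insert g \<Gamma> \<Vdash> B"
    proof (rule provR_replace_hyp[OF B])
      show "\<Delta> \<subseteq> insert A (insert g \<Gamma>)" using sub by blast
      show "eqE pl R A g" using ac_eq_eqE ac_eq_sym g(2) by blast
    qed (auto intro: ectx.hole hyps_ok_insert[OF ok_\<Gamma> nf_g])
    ultimately show ?thesis using g by blast
  qed blast
qed

lemma provR_guarded_ac_subterm: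
  assumes A: "\<Gamma> \<Vdash> A" and "guarded A" and C: "C \<in> ectx ar \<Gamma>" "eqE pl R A C"
  shows "\<exists>g. guarded g \<and> (\<exists>t\<in>\<Gamma>. subterm g t) \<and> ac_eq pl A g \<and> \<Gamma> \<Vdash> g \<and> nf ar pl R g"
proof -
  have "hyps_ok ar pl R \<Gamma>" "nf ar pl R A" using provR_seq_ok[OF A] seq_ok_iff by blast+
  then obtain t g where g: "t \<in> \<Gamma>" "subterm g t" "guarded g" "ac_eq pl A g"
    using guarded_eqE_ectx_ac_subterm[OF _ _ \<open>guarded A\<close> C] hyps_ok_nf by blast
  then show ?thesis
    using provR_ac_eq[OF A g(4)] nf_subterm \<open>hyps_ok ar pl R \<Gamma>\<close> hyps_ok_nf by blast
qed

text \<open>The side premise of a left rule survives a cut on A: either directly, or after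
  adding (by ls) a guarded subterm of \<Gamma> that is AC-equal to A.\<close>

lemma provR_cut_side_premise:
  assumes A: "\<Gamma> \<Vdash> A" and K: "\<Delta> \<Vdash> K" and sub: "\<Delta> \<subseteq> insert A \<Gamma>" and "\<exists>t\<in>\<Gamma>. subterm K t"
  shows "\<exists>\<Gamma>'. \<Gamma> \<subseteq> \<Gamma>' \<and> hyps_ok ar pl R \<Gamma>' \<and> \<Gamma>' \<Vdash> K \<and> (\<forall>T. \<Gamma>' \<turnstile> T \<longrightarrow> \<Gamma> \<turnstile> T)"
  using provR_cut_or_guarded[OF A K sub]
proof (elim disjE exE conjE)
  assume "\<Gamma> \<Vdash> K"
  then show ?thesis using provR_seq_ok[OF A] seq_ok_iff by blast
next
  fix g assume g: "guarded g" "\<exists>t\<in>insert K \<Gamma>. subterm g t" "\<Gamma> \<Vdash> g" "insert g \<Gamma> \<Vdash> K"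
  then have "\<exists>t\<in>insert T \<Gamma>. subterm g t" for T using assms(4) subterm_trans by blast
  then have "insert g \<Gamma> \<turnstile> T \<Longrightarrow> \<Gamma> \<turnstile> T" for T using provL_guarded_subterm g by blast
  moreover have "hyps_ok ar pl R (insert g \<Gamma>)" using provR_seq_ok[OF g(4)] seq_ok_iff by blast
  ultimately show ?thesis using g(4) by blast
qed

definition cut_admissible_below :: "nat \<Rightarrow> bool" where
  "cut_admissible_below n \<longleftrightarrow> (\<forall>B \<Gamma> T. size B < n \<longrightarrow> \<Gamma> \<Vdash> B \<longrightarrow> insert B \<Gamma> \<turnstile> T \<longrightarrow> \<Gamma> \<turnstile> T)"

lemma cut_admissible_belowD:
  "cut_admissible_below n \<Longrightarrow> size B < n \<Longrightarrow> \<Gamma> \<Vdash> B \<Longrightarrow> insert B \<Gamma> \<turnstile> T \<Longrightarrow> \<Gamma> \<turnstile> T"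
  unfolding cut_admissible_below_def by blast

lemma cut_admissible_below_two:
  assumes "cut_admissible_below n" "size M < n" "size N < n" "\<Gamma> \<Vdash> M" "\<Gamma> \<Vdash> N"
    and "insert M (insert N \<Gamma>) \<turnstile> T"
  shows "\<Gamma> \<turnstile> T"
proof -
  have "hyps_ok ar pl R (insert N \<Gamma>)"
    using provR_seq_ok[OF assms(5)] seq_ok_iff hyps_ok_insert by blast
  then have "insert N \<Gamma> \<Vdash> M" using provR_mono[OF assms(4)] by blast
  then have "insert N \<Gamma> \<turnstile> T" using cut_admissible_belowD assms(1,2,6) by blast
  then show ?thesis using cut_admissible_belowD assms(1,3,5) by blast
qed

lemma cut_decompose_left:
  assumes c: "c \<in> {Pair, Enc, Blind}" and below: "cut_admissible_below (size A)" and A: "\<Gamma> \<Vdash> A"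
    and sub: "insert (c M K) \<Delta> \<subseteq> insert A \<Gamma>"
    and T: "seq_ok ar pl R (insert (c M K) \<Delta>) T"
    and side: "c = Pair \<or> insert (c M K) \<Delta> \<Vdash> K"
    and premise: "insert (c M K) (insert M (insert K \<Delta>)) \<turnstile> T"
    and IH: "\<And>G. insert (c M K) (insert M (insert K \<Delta>)) \<subseteq> insert A G \<Longrightarrow> G \<Vdash> A \<Longrightarrow> G \<turnstile> T"
  shows "\<Gamma> \<turnstile> T"
proof -
  have c': "c \<in> {Pair, Enc, Sign, Blind}" using c by blast
  have ok_\<Gamma>: "hyps_ok ar pl R \<Gamma>" using provR_seq_ok[OF A] seq_ok_iff by blast
  have T_ok: "seq_ok ar pl R G T" if "hyps_ok ar pl R G" for G using that T seq_ok_iff by blast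
  have nf_MK: "nf ar pl R M" "nf ar pl R K"
    using provL_seq_ok[OF premise] by (auto simp: seq_ok_def)
  have IH': "G \<turnstile> T" if "\<Gamma> \<subseteq> G" "hyps_ok ar pl R G"
    "insert (c M K) (insert M (insert K \<Delta>)) \<subseteq> insert A G" for G
    using IH provR_mono[OF A] that by blast
  have ok_MK: "hyps_ok ar pl R (insert M (insert K G))" if "hyps_ok ar pl R G" for G
    using that nf_MK hyps_ok_insert by blast
  consider (hyp) "c M K \<in> \<Gamma>" | (principal) "A = c M K" using sub by blast
  then show ?thesis
  proof cases
    case hyp
    obtain \<Gamma>' where \<Gamma>': "\<Gamma> \<subseteq> \<Gamma>'" "hyps_ok ar pl R \<Gamma>'" "c = Pair \<or> \<Gamma>' \<Vdash> K"
      "\<And>T. \<Gamma>' \<turnstile> T \<Longrightarrow> \<Gamma> \<turnstile> T"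
    proof (cases "c = Pair")
      case False
      then have "\<exists>t\<in>\<Gamma>. subterm K t" using hyp binary_constructor(5)[OF c'] by blast
      then show ?thesis using provR_cut_side_premise[OF A _ sub] side False that by blast
    qed (use ok_\<Gamma> in blast)
    have "insert M (insert K \<Gamma>') \<turnstile> T" using sub \<Gamma>'(1) by (intro IH' ok_MK \<Gamma>'(2)) auto
    then have "\<Gamma>' \<turnstile> T" using provL_decompose_left[OF c _ T_ok[OF \<Gamma>'(2)] \<Gamma>'(3)] hyp \<Gamma>'(1) by blast
    then show ?thesis using \<Gamma>'(4) by blast
  next
    case principal
    have sizes: "size M < size A" "size K < size A"
      using principal binary_constructor[OF c'] by auto
    consider (args) "\<Gamma> \<Vdash> M" "\<Gamma> \<Vdash> K" | (ectx) C where "C \<in> ectx ar \<Gamma>" "eqE pl R A C"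
      using provR_args_or_ectx[OF c', of ar pl R \<Gamma> M K] A principal by blast
    then show ?thesis
    proof cases
      case args
      have "insert M (insert K \<Gamma>) \<turnstile> T" using sub principal by (intro IH' ok_MK ok_\<Gamma>) auto
      then show ?thesis using cut_admissible_below_two[OF below sizes args] by blast
    next
      case ectx
      have "guarded A" using principal binary_constructor(1)[OF c'] by simp
      then obtain g where g: "guarded g" "\<exists>t\<in>\<Gamma>. subterm g t" "ac_eq pl A g" "\<Gamma> \<Vdash> g" "nf ar pl R g"
        using provR_guarded_ac_subterm[OF A _ ectx] by blast
      then obtain M' K' where g_eq: "g = c M' K'" "ac_eq pl M M'" "ac_eq pl K K'"
        using binary_constructor(7)[OF c'] principal by blast
      define G where "G = insert M' (insert K' (insert g \<Gamma>))"
      have ok_g: "hyps_ok ar pl R (insert g \<Gamma>)" using ok_\<Gamma> g(5) hyps_ok_insert by blast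
      then have ok_G: "hyps_ok ar pl R G"
        unfolding G_def using binary_constructor(6)[OF c'] g(5) g_eq(1) hyps_ok_insert by metis
      have "insert M (insert K G) \<turnstile> T"
        using sub principal by (intro IH' ok_MK ok_G) (auto simp: G_def)
      moreover have "G \<Vdash> M" "G \<Vdash> K"
        using provR_ac_hyp[OF ok_G] nf_MK g_eq unfolding G_def by blast+
      ultimately have "G \<turnstile> T" using cut_admissible_below_two[OF below sizes] by blast
      moreover have "c = Pair \<or> insert g \<Gamma> \<Vdash> K'"
      proof (cases "c = Pair")
        case False
        then have "insert g \<Gamma> \<Vdash> K"
          using provR_replace_hyp[OF _ _ ac_eq_eqE[OF g(3)] ectx.hole ok_g] side sub by blast
        then show ?thesis using provR_ac_eq g_eq(3) by blast
      qed simp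
      ultimately have "insert g \<Gamma> \<turnstile> T"
        using provL_decompose_left[OF c _ T_ok[OF ok_g]] g_eq(1) unfolding G_def by blast
      then show ?thesis using provL_guarded_subterm g by blast
    qed
  qed
qed

lemma cut_sign_left:
  assumes below: "cut_admissible_below (size A)" and A: "\<Gamma> \<Vdash> A"
    and sub: "insert (Sign M K) (insert (Pub L) \<Delta>) \<subseteq> insert A \<Gamma>" and KL: "ac_eq pl K L"
    and T: "seq_ok ar pl R (insert (Sign M K) (insert (Pub L) \<Delta>)) T"
    and premise: "insert (Sign M K) (insert (Pub L) (insert M \<Delta>)) \<turnstile> T"
    and IH: "\<And>G. insert (Sign M K) (insert (Pub L) (insert M \<Delta>)) \<subseteq> insert A G \<Longrightarrow> G \<Vdash> A \<Longrightarrow> G \<turnstile> T"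
  shows "\<Gamma> \<turnstile> T"
proof -
  have ok_\<Gamma>: "hyps_ok ar pl R \<Gamma>" using provR_seq_ok[OF A] seq_ok_iff by blast
  have T_ok: "seq_ok ar pl R G T" if "hyps_ok ar pl R G" for G using that T seq_ok_iff by blast
  have nf_M: "nf ar pl R M" using provL_seq_ok[OF premise] by (simp add: seq_ok_def)
  have IH': "insert M G \<turnstile> T" if "\<Gamma> \<subseteq> G" "hyps_ok ar pl R G"
    "insert (Sign M K) (insert (Pub L) \<Delta>) \<subseteq> insert A G" for G
  proof -
    have "hyps_ok ar pl R (insert M G)" using hyps_ok_insert[OF that(2) nf_M] .
    then have "insert M G \<Vdash> A" using provR_mono[OF A] that(1) by blast
    moreover have "insert (Sign M K) (insert (Pub L) (insert M \<Delta>)) \<subseteq> insert A (insert M G)"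
      using that(3) by blast
    ultimately show ?thesis using IH by blast
  qed
  have ok_g: "hyps_ok ar pl R (insert g \<Gamma>)" if "\<exists>t\<in>\<Gamma>. subterm g t" for g
    using that ok_\<Gamma> hyps_ok_nf nf_subterm hyps_ok_insert by blast
  consider (hyps) "Sign M K \<in> \<Gamma>" "Pub L \<in> \<Gamma>" | (pub) "Sign M K \<in> \<Gamma>" "A = Pub L"
    | (sign) "A = Sign M K" "Pub L \<in> \<Gamma>"
    using sub by blast
  then show ?thesis
  proof cases
    case hyps
    have "insert M \<Gamma> \<turnstile> T" using sub by (intro IH' ok_\<Gamma>) auto
    then show ?thesis using provL_sign_left[OF hyps KL T_ok[OF ok_\<Gamma>]] by blast
  next
    case pub
    have "guarded A" using pub by simp
    moreover obtain C where "C \<in> ectx ar \<Gamma>" "eqE pl R A C" using provR_Pub_ectx A pub by blast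
    ultimately obtain g where g: "guarded g" "\<exists>t\<in>\<Gamma>. subterm g t" "ac_eq pl A g" "\<Gamma> \<Vdash> g"
      using provR_guarded_ac_subterm[OF A] by blast
    then obtain L' where L': "g = Pub L'" "ac_eq pl L L'" using ac_eq_Pub pub by blast
    have "insert M (insert g \<Gamma>) \<turnstile> T" using sub pub by (intro IH' ok_g g(2)) auto
    then have "insert g \<Gamma> \<turnstile> T"
      using provL_sign_left[OF _ _ ac_eq_trans[OF KL L'(2)] T_ok[OF ok_g[OF g(2)]]] pub L'(1)
        by blast
    then show ?thesis using provL_guarded_subterm g by blast
  next
    case sign
    have size_M: "size M < size A" using sign by simp
    consider (arg) "\<Gamma> \<Vdash> M" | (ectx) C where "C \<in> ectx ar \<Gamma>" "eqE pl R A C"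
      using provR_args_or_ectx[of Sign ar pl R \<Gamma> M K] A sign by blast
    then show ?thesis
    proof cases
      case arg
      have "insert M \<Gamma> \<turnstile> T" using sub sign by (intro IH' ok_\<Gamma>) auto
      then show ?thesis using cut_admissible_belowD[OF below size_M arg] by blast
    next
      case ectx
      have "guarded A" using sign by simp
      then obtain g where g: "guarded g" "\<exists>t\<in>\<Gamma>. subterm g t" "ac_eq pl A g" "\<Gamma> \<Vdash> g" "nf ar pl R g"
        using provR_guarded_ac_subterm[OF A _ ectx] by blast
      then obtain M' K' where g_eq: "g = Sign M' K'" "ac_eq pl M M'" "ac_eq pl K K'"
        using ac_eq_Sign sign by blast
      define G where "G = insert M' (insert g \<Gamma>)"
      have "nf ar pl R M'" using binary_constructor(6)[of Sign] g(5) g_eq(1) by blast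
      then have ok_G: "hyps_ok ar pl R G" unfolding G_def
        using ok_g[OF g(2)] hyps_ok_insert by blast
      have "insert M G \<turnstile> T" using sub sign by (intro IH' ok_G) (auto simp: G_def)
      moreover have "G \<Vdash> M" using provR_ac_hyp[OF ok_G nf_M] g_eq unfolding G_def by blast
      ultimately have "G \<turnstile> T" using cut_admissible_belowD[OF below size_M] by blast
      moreover have "ac_eq pl K' L" using g_eq(3) KL ac_eq_sym ac_eq_trans by blast
      ultimately have "insert g \<Gamma> \<turnstile> T"
        using provL_sign_left[OF _ _ _ T_ok[OF ok_g[OF g(2)]]] g_eq(1) sign unfolding G_def by blast
      then show ?thesis using provL_guarded_subterm g by blast
    qed
  qed
qed

context
  fixes A M Rr K T :: "'f trm" and \<Gamma> \<Delta> :: "'f trm set"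
  assumes below: "cut_admissible_below (size A)" and A: "\<Gamma> \<Vdash> A"
    and sub: "insert (Sign (Blind M Rr) K) \<Delta> \<subseteq> insert A \<Gamma>"
    and T: "seq_ok ar pl R (insert (Sign (Blind M Rr) K) \<Delta>) T"
    and side: "insert (Sign (Blind M Rr) K) \<Delta> \<Vdash> Rr"
    and premise: "insert (Sign (Blind M Rr) K) (insert (Sign M K) (insert Rr \<Delta>)) \<turnstile> T"
    and IH: "\<And>G. insert (Sign (Blind M Rr) K) (insert (Sign M K) (insert Rr \<Delta>)) \<subseteq> insert A G \<Longrightarrow>
      G \<Vdash> A \<Longrightarrow> G \<turnstile> T"
begin

lemma unblind_hyps_ok: "hyps_ok ar pl R \<Gamma>"
  using provR_seq_ok[OF A] seq_ok_iff by blast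

lemma unblind_T_ok: "hyps_ok ar pl R G \<Longrightarrow> seq_ok ar pl R G T"
  using T seq_ok_iff by blast

lemma unblind_nf: "nf ar pl R (Sign M K)" "nf ar pl R Rr"
  using provL_seq_ok[OF premise] by (simp_all add: seq_ok_def)

lemma unblind_IH:
  assumes "\<Gamma> \<subseteq> G" "hyps_ok ar pl R G" "A = Sign (Blind M Rr) K \<or> Sign (Blind M Rr) K \<in> G"
  shows "insert (Sign M K) (insert Rr G) \<turnstile> T"
proof -
  have ok: "hyps_ok ar pl R (insert (Sign M K) (insert Rr G))"
    using hyps_ok_insert[OF hyps_ok_insert[OF assms(2) unblind_nf(2)] unblind_nf(1)] .
  have "insert (Sign M K) (insert Rr G) \<Vdash> A" using provR_mono[OF A _ ok] assms(1) by blast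
  moreover have "insert (Sign (Blind M Rr) K) (insert (Sign M K) (insert Rr \<Delta>)) \<subseteq>
      insert A (insert (Sign M K) (insert Rr G))"
    using sub assms(1,3) by blast
  ultimately show ?thesis using IH by blast
qed

lemma unblind_cut_args:
  assumes "A = Sign (Blind M Rr) K" "\<Gamma> \<subseteq> G" "hyps_ok ar pl R G" "G \<Vdash> Sign M K" "G \<Vdash> Rr"
  shows "G \<turnstile> T"
proof -
  have "size (Sign M K) < size A" "size Rr < size A" using assms(1) by auto
  then show ?thesis using cut_admissible_below_two[OF below] unblind_IH assms by blast
qed

lemma unblind_via_ac_subterm:
  assumes A_eq: "A = Sign (Blind M Rr) K"
    and g: "guarded g" "\<exists>t\<in>\<Gamma>. subterm g t" "ac_eq pl A g" "\<Gamma> \<Vdash> g"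
  shows "\<Gamma> \<turnstile> T"
proof -
  obtain b K' where g1: "g = Sign b K'" "ac_eq pl (Blind M Rr) b" "ac_eq pl K K'"
    using ac_eq_Sign g(3) A_eq by blast
  obtain M' R' where g2: "b = Blind M' R'" "ac_eq pl M M'" "ac_eq pl Rr R'"
    using ac_eq_Blind g1(2) by blast
  have "nf ar pl R g" using g(2) unblind_hyps_ok hyps_ok_nf nf_subterm by blast
  then have ok_g: "hyps_ok ar pl R (insert g \<Gamma>)" using hyps_ok_insert[OF unblind_hyps_ok] by blast
  have "insert g \<Gamma> \<Vdash> Rr"
    using provR_replace_hyp[OF side _ ac_eq_eqE[OF g(3)] ectx.hole ok_g] sub by blast
  then have side_g: "insert g \<Gamma> \<Vdash> R'" using provR_ac_eq g2(3) by blast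
  have SMK: "ac_eq pl (Sign M K) (Sign M' K')"
    using ac_eq_trans[OF ac_eq_ctxt_fun[OF ctxt_fun_constructors(2) g2(2)]
        ac_eq_ctxt_fun[OF ctxt_fun_constructors(3) g1(3)]] .
  define G where "G = insert (Sign M' K') (insert R' (insert g \<Gamma>))"
  have "nf ar pl R (Sign M' K')" "nf ar pl R R'"
    using unblind_nf nf_ac_eq SMK g2(3) by blast+
  then have ok_G: "hyps_ok ar pl R G" unfolding G_def
    using hyps_ok_insert[OF hyps_ok_insert[OF ok_g]] by blast
  have "G \<Vdash> Sign M K" "G \<Vdash> Rr"
    using provR_ac_hyp[OF ok_G] unblind_nf SMK g2(3) unfolding G_def by blast+
  then have "G \<turnstile> T" using unblind_cut_args[OF A_eq _ ok_G] unfolding G_def by blast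
  then have "insert g \<Gamma> \<turnstile> T"
    using provL_unblind_left[OF _ unblind_T_ok[OF ok_g] side_g] g1(1) g2(1) unfolding G_def by blast
  then show ?thesis using provL_guarded_subterm g by blast
qed

lemma unblind_via_blind:
  assumes A_eq: "A = Sign (Blind M Rr) K" and Rr: "\<Gamma> \<Vdash> Rr" and K: "\<Gamma> \<Vdash> K"
    and g: "guarded g" "\<exists>t\<in>\<Gamma>. subterm g t" "ac_eq pl (Blind M Rr) g" "\<Gamma> \<Vdash> g" "nf ar pl R g"
  shows "\<Gamma> \<turnstile> T"
proof -
  obtain M' R' where g_eq: "g = Blind M' R'" "ac_eq pl M M'" "ac_eq pl Rr R'"
    using ac_eq_Blind g(3) by blast
  have nf_M'R': "nf ar pl R M'" "nf ar pl R R'"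
    using binary_constructor(6)[of Blind] g(5) g_eq(1) by blast+
  have nf_M: "nf ar pl R M" using binary_constructor(6)[of Sign] unblind_nf(1) by blast
  have ok_g: "hyps_ok ar pl R (insert g \<Gamma>)" using hyps_ok_insert[OF unblind_hyps_ok g(5)] .
  define G where "G = insert M' (insert R' (insert g \<Gamma>))"
  have ok_G: "hyps_ok ar pl R G" unfolding G_def
    using hyps_ok_insert[OF hyps_ok_insert[OF ok_g]] nf_M'R' by blast
  have "\<Gamma> \<subseteq> G" unfolding G_def by blast
  have "G \<Vdash> M" using provR_ac_hyp[OF ok_G nf_M] g_eq(2) unfolding G_def by blast
  moreover have "G \<Vdash> K" using provR_mono[OF K \<open>\<Gamma> \<subseteq> G\<close> ok_G] .
  ultimately have "G \<Vdash> Sign M K" using provR.signR ok_G unblind_nf(1) seq_ok_iff by blast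
  moreover have "G \<Vdash> Rr" using provR_mono[OF Rr \<open>\<Gamma> \<subseteq> G\<close> ok_G] .
  ultimately have "G \<turnstile> T" using unblind_cut_args[OF A_eq \<open>\<Gamma> \<subseteq> G\<close> ok_G] by blast
  moreover have "insert g \<Gamma> \<Vdash> R'" using provR_ac_eq[OF provR_mono[OF Rr _ ok_g] g_eq(3)] by blast
  ultimately have "insert g \<Gamma> \<turnstile> T"
    using provL_decompose_left[of Blind, OF _ _ unblind_T_ok[OF ok_g]] g_eq(1) unfolding G_def
      by blast
  then show ?thesis using provL_guarded_subterm g by blast
qed

text \<open>When the cut formula is the principal formula Sign (Blind M Rr) K, it was either
  built by right rules, which are cut against the premise Sign M K, Rr, or it is, up to AC,
  a guarded subterm of \<Gamma> (possibly only its part Blind M Rr), on which the left rule is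
  replayed.\<close>

lemma cut_unblind_left: "\<Gamma> \<turnstile> T"
proof -
  consider (hyp) "Sign (Blind M Rr) K \<in> \<Gamma>" | (principal) "A = Sign (Blind M Rr) K"
    using sub by blast
  then show ?thesis
  proof cases
    case hyp
    then have "\<exists>t\<in>\<Gamma>. subterm Rr t" using subterm.sign1[OF subterm.blind2[OF subterm.refl]] by blast
    then obtain \<Gamma>' where \<Gamma>': "\<Gamma> \<subseteq> \<Gamma>'" "hyps_ok ar pl R \<Gamma>'" "\<Gamma>' \<Vdash> Rr" "\<And>T. \<Gamma>' \<turnstile> T \<Longrightarrow> \<Gamma> \<turnstile> T"
      using provR_cut_side_premise[OF A side sub] by blast
    have "insert (Sign M K) (insert Rr \<Gamma>') \<turnstile> T" using unblind_IH \<Gamma>' hyp by blast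
    then have "\<Gamma>' \<turnstile> T"
      using provL_unblind_left[OF _ unblind_T_ok[OF \<Gamma>'(2)] \<Gamma>'(3)] hyp \<Gamma>'(1) by blast
    then show ?thesis using \<Gamma>'(4) by blast
  next
    case principal
    have ac_subterm: "\<Gamma> \<turnstile> T" if "guarded g" "\<exists>t\<in>\<Gamma>. subterm g t" "ac_eq pl A g" "\<Gamma> \<Vdash> g" for g
      using unblind_via_ac_subterm[OF principal that] .
    consider (Rr) "\<Gamma> \<Vdash> Rr"
      | (guarded) g where "guarded g" "ac_eq pl g A" "\<exists>t\<in>insert Rr \<Gamma>. subterm g t" "\<Gamma> \<Vdash> g"
      using provR_cut_or_guarded[OF A side sub] by blast
    then show ?thesis
    proof cases
      case Rr
      consider (args) "\<Gamma> \<Vdash> Blind M Rr" "\<Gamma> \<Vdash> K" | (ectx) C where "C \<in> ectx ar \<Gamma>" "eqE pl R A C"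
        using provR_args_or_ectx[of Sign ar pl R \<Gamma> "Blind M Rr" K] A principal by blast
      then show ?thesis
      proof cases
        case args
        consider "\<Gamma> \<Vdash> M" | C where "C \<in> ectx ar \<Gamma>" "eqE pl R (Blind M Rr) C"
          using provR_args_or_ectx[of Blind ar pl R \<Gamma> M Rr] args(1) by blast
        then show ?thesis
        proof cases
          case 1
          then have "\<Gamma> \<Vdash> Sign M K"
            using provR.signR args(2) unblind_hyps_ok unblind_nf(1) seq_ok_iff by blast
          then show ?thesis using unblind_cut_args[OF principal _ unblind_hyps_ok _ Rr] by blast
        next
          case 2
          have "guarded (Blind M Rr)" by simp
          then show ?thesis
            using provR_guarded_ac_subterm[OF args(1) _ 2]
              unblind_via_blind[OF principal Rr args(2)]
            by blast
        qed
      next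
        case ectx
        have "guarded A" using principal by simp
        then show ?thesis using provR_guarded_ac_subterm[OF A _ ectx] ac_subterm by blast
      qed
    next
      case guarded
      have "\<not> subterm g Rr"
        using subterm_size[of g Rr] ac_eq_size[OF guarded(2)] principal by auto
      then show ?thesis using ac_subterm guarded ac_eq_sym by blast
    qed
  qed
qed
end

lemma cut_guarded_subterm:
  assumes below: "cut_admissible_below (size A)" and A: "\<Gamma> \<Vdash> A" and sub: "\<Delta> \<subseteq> insert A \<Gamma>"
    and "guarded A'" and occurs: "\<exists>t\<in>insert T \<Delta>. subterm A' t" and A': "\<Delta> \<Vdash> A'"
    and IH: "\<And>G. insert A' \<Delta> \<subseteq> insert A G \<Longrightarrow> G \<Vdash> A \<Longrightarrow> G \<turnstile> T"
  shows "\<Gamma> \<turnstile> T"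
proof (cases "A' = A")
  case True
  with sub have "insert A' \<Delta> \<subseteq> insert A \<Gamma>" by blast
  then show ?thesis using IH A by blast
next
  case False
  have nf_A': "nf ar pl R A'" using provR_seq_ok[OF A'] seq_ok_iff by blast
  have from_A': "G \<turnstile> T" if G: "\<Gamma> \<subseteq> G" "hyps_ok ar pl R G" "G \<Vdash> A'" for G
  proof -
    have ok: "hyps_ok ar pl R (insert A' G)" using hyps_ok_insert[OF G(2) nf_A'] .
    have "insert A' G \<Vdash> A" using provR_mono[OF A subset_insertI2[OF G(1)] ok] .
    moreover have "insert A' \<Delta> \<subseteq> insert A (insert A' G)" using sub G(1) by blast
    ultimately have premise: "insert A' G \<turnstile> T" using IH by blast
    show ?thesis
    proof (cases "\<exists>t\<in>insert T G. subterm A' t")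
      case True
      then show ?thesis using provL_guarded_subterm[OF G(3) \<open>guarded A'\<close>] premise by blast
    next
      case False
      then have "subterm A' A" using occurs sub G(1) by blast
      then have "size A' < size A" using False subterm_size_cases \<open>A' \<noteq> A\<close> by blast
      then show ?thesis using cut_admissible_belowD[OF below _ G(3) premise] by blast
    qed
  qed
  consider (derivable) "\<Gamma> \<Vdash> A'"
    | (guarded) g where "guarded g" "ac_eq pl g A" "\<exists>t\<in>insert A' \<Gamma>. subterm g t" "\<Gamma> \<Vdash> g"
        "insert g \<Gamma> \<Vdash> A'"
    using provR_cut_or_guarded[OF A A' sub] by blast
  then show ?thesis
  proof cases
    case derivable
    then show ?thesis using from_A' provR_seq_ok[OF A] seq_ok_iff by blast
  next
    case guarded
    have "\<exists>t\<in>insert T \<Gamma>. subterm g t"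
    proof (cases "subterm g A'")
      case True
      from occurs obtain t where t: "t \<in> insert T \<Delta>" "subterm A' t" by blast
      have "t \<noteq> A"
        using subterm_size_cases[OF t(2)] subterm_size[OF True] ac_eq_size[OF guarded(2)] False
        by auto
      then show ?thesis using t sub True subterm_trans by blast
    qed (use guarded(3) in blast)
    moreover have "insert g \<Gamma> \<turnstile> T"
      using from_A' guarded(5) provR_seq_ok[OF guarded(5)] seq_ok_iff by blast
    ultimately show ?thesis using provL_guarded_subterm guarded(1,4) by blast
  qed
qed

lemma cut_provR: "\<Gamma> \<Vdash> A \<Longrightarrow> \<Delta> \<Vdash> T \<Longrightarrow> \<Delta> \<subseteq> insert A \<Gamma> \<Longrightarrow> \<Gamma> \<turnstile> T"
  using provR_cut_or_guarded provL.r provR_seq_ok provL_guarded_subterm by meson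

lemma cut_provR_provL: "\<Gamma> \<Vdash> A \<Longrightarrow> \<Delta> \<turnstile> T \<Longrightarrow> \<Delta> \<subseteq> insert A \<Gamma> \<Longrightarrow> \<Gamma> \<turnstile> T"
proof (induction "size A" arbitrary: A \<Gamma> \<Delta> T rule: less_induct)
  case less
  have below: "cut_admissible_below (size A)"
    unfolding cut_admissible_below_def using less.hyps by blast
  from less.prems(2,3,1) show ?case
  proof (induction arbitrary: \<Gamma> rule: provL.induct)
    case (r \<Delta> T)
    then show ?case using cut_provR by blast
  next
    case (lp M N \<Delta> T)
    show ?case
      by (rule cut_decompose_left[of Pair, OF _ below lp.prems(2,1) lp.hyps(1) _ lp.hyps(2) lp.IH])
        simp_all
  next
    case (le M K \<Delta> N)
    show ?case
      by (rule cut_decompose_left[of Enc, OF _ below le.prems(2,1) le.hyps(1) _ le.hyps(3) le.IH])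
        (simp_all add: le.hyps(2))
  next
    case (sign M K L \<Delta> N)
    show ?case
      by (rule cut_sign_left[OF below sign.prems(2,1) sign.hyps(2,1,3) sign.IH])
  next
    case (blind1 M K \<Delta> N)
    show ?case
      by (rule cut_decompose_left[of Blind, OF _ below blind1.prems(2,1) blind1.hyps(1) _
            blind1.hyps(3) blind1.IH]) (simp_all add: blind1.hyps(2))
  next
    case (blind2 M Rr K \<Delta> N)
    show ?case
      by (rule cut_unblind_left[OF below blind2.prems(2,1) blind2.hyps blind2.IH])
  next
    case (ls \<Delta> T A')
    show ?case
      by (rule cut_guarded_subterm[OF below ls.prems(2,1) ls.hyps(2-4) ls.IH])
  qed
qed

lemma provL_cut_weaken: "\<Delta> \<turnstile> A \<Longrightarrow> insert A \<Gamma> \<turnstile> T \<Longrightarrow> \<Gamma> \<subseteq> \<Delta> \<Longrightarrow> insert A \<Delta> \<turnstile> T"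
  by (meson provL_mono provL_seq_ok seq_ok_iff hyps_ok_insert insert_mono)

lemma provL_cut_seq_ok: "\<Delta> \<turnstile> A \<Longrightarrow> insert A \<Delta> \<turnstile> T \<Longrightarrow> seq_ok ar pl R \<Delta> T"
  by (meson provL_seq_ok seq_ok_iff)

lemma provL_cut: "\<Gamma> \<turnstile> A \<Longrightarrow> insert A \<Gamma> \<turnstile> T \<Longrightarrow> \<Gamma> \<turnstile> T"
proof (induction arbitrary: T rule: provL.induct)
  case (r \<Gamma> M)
  show ?case by (rule cut_provR_provL[OF r.hyps(2) r.prems]) simp
next
  case (lp M N \<Gamma> A T)
  have "insert A (insert (Pair M N) (insert M (insert N \<Gamma>))) \<turnstile> T"
    by (rule provL_cut_weaken[OF lp.hyps(2) lp.prems]) blast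
  then have "insert (Pair M N) (insert M (insert N \<Gamma>)) \<turnstile> T" by (rule lp.IH)
  with provL_cut_seq_ok[OF provL.lp[OF lp.hyps] lp.prems] show ?case by (rule provL.lp)
next
  case (le M K \<Gamma> N T)
  have "insert N (insert (Enc M K) (insert M (insert K \<Gamma>))) \<turnstile> T"
    by (rule provL_cut_weaken[OF le.hyps(3) le.prems]) blast
  then have "insert (Enc M K) (insert M (insert K \<Gamma>)) \<turnstile> T" by (rule le.IH)
  with provL_cut_seq_ok[OF provL.le[OF le.hyps] le.prems] le.hyps(2) show ?case by (rule provL.le)
next
  case (sign M K L \<Gamma> N T)
  have "insert N (insert (Sign M K) (insert (Pub L) (insert M \<Gamma>))) \<turnstile> T"
    by (rule provL_cut_weaken[OF sign.hyps(3) sign.prems]) blast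
  then have "insert (Sign M K) (insert (Pub L) (insert M \<Gamma>)) \<turnstile> T" by (rule sign.IH)
  with provL_cut_seq_ok[OF provL.sign[OF sign.hyps] sign.prems] sign.hyps(2) show ?case
    by (rule provL.sign)
next
  case (blind1 M K \<Gamma> N T)
  have "insert N (insert (Blind M K) (insert M (insert K \<Gamma>))) \<turnstile> T"
    by (rule provL_cut_weaken[OF blind1.hyps(3) blind1.prems]) blast
  then have "insert (Blind M K) (insert M (insert K \<Gamma>)) \<turnstile> T" by (rule blind1.IH)
  with provL_cut_seq_ok[OF provL.blind1[OF blind1.hyps] blind1.prems] blind1.hyps(2) show ?case
    by (rule provL.blind1)
next
  case (blind2 M Rr K \<Gamma> N T)
  have "insert N (insert (Sign (Blind M Rr) K) (insert (Sign M K) (insert Rr \<Gamma>))) \<turnstile> T"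
    by (rule provL_cut_weaken[OF blind2.hyps(3) blind2.prems]) blast
  then have "insert (Sign (Blind M Rr) K) (insert (Sign M K) (insert Rr \<Gamma>)) \<turnstile> T"
    by (rule blind2.IH)
  with provL_cut_seq_ok[OF provL.blind2[OF blind2.hyps] blind2.prems] blind2.hyps(2) show ?case
    by (rule provL.blind2)
next
  case (ls \<Gamma> M A' T)
  have "insert M (insert A' \<Gamma>) \<turnstile> T" by (rule provL_cut_weaken[OF ls.hyps(5) ls.prems]) blast
  then have "insert A' \<Gamma> \<turnstile> T" by (rule ls.IH)
  then show ?case by (rule cut_provR_provL[OF ls.hyps(4)]) simp
qed

lemma provL_right:
  assumes "\<Gamma> \<turnstile> M" "\<Gamma> \<turnstile> N" "insert N (insert M \<Gamma>) \<Vdash> X" "seq_ok ar pl R \<Gamma> X"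
  shows "\<Gamma> \<turnstile> X"
proof -
  have "hyps_ok ar pl R (insert M \<Gamma>)"
    using provL_seq_ok[OF assms(1)] seq_ok_iff hyps_ok_insert by blast
  then have "insert M \<Gamma> \<turnstile> N" using provL_mono[OF assms(2)] by blast
  moreover have "insert N (insert M \<Gamma>) \<turnstile> X" using provL.r[OF provR_seq_ok[OF assms(3)] assms(3)] .
  ultimately have "insert M \<Gamma> \<turnstile> X" by (rule provL_cut)
  then show ?thesis using provL_cut[OF assms(1)] by blast
qed

lemma provL_right_rule:
  assumes "c \<in> {Pair, Enc, Sign, Blind}" "seq_ok ar pl R \<Gamma> (c M N)" "\<Gamma> \<turnstile> M" "\<Gamma> \<turnstile> N"
  shows "\<Gamma> \<turnstile> c M N"
proof -
  have ok: "hyps_ok ar pl R (insert N (insert M \<Gamma>))"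
    using provL_seq_ok[OF assms(3)] provL_seq_ok[OF assms(4)] seq_ok_iff hyps_ok_insert by metis
  then have "seq_ok ar pl R (insert N (insert M \<Gamma>)) (c M N)" using assms(2) seq_ok_iff by blast
  moreover have "insert N (insert M \<Gamma>) \<Vdash> M" "insert N (insert M \<Gamma>) \<Vdash> N"
    by (simp_all add: provR_hyp[OF ok])
  ultimately have "insert N (insert M \<Gamma>) \<Vdash> c M N"
    using assms(1) by (auto intro: provR.intros(2-5))
  then show ?thesis using provL_right assms(2-4) by blast
qed

lemma provS_provL: "provS ar pl R \<Gamma> M \<Longrightarrow> \<Gamma> \<turnstile> M"
proof (induction rule: provS.induct)
  case (idS \<Gamma> M C)
  then show ?case by (blast intro: provL.r provR.idR)
next
  case (eL M K \<Gamma> N)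
  let ?G = "insert K (insert (Enc M K) \<Gamma>)"
  have ok: "hyps_ok ar pl R ?G" using provL_seq_ok[OF eL.IH(1)] seq_ok_iff hyps_ok_insert by blast
  have "?G \<turnstile> N"
  proof (rule provL_decompose_left[of Enc])
    show "seq_ok ar pl R ?G N" using ok provL_seq_ok[OF eL.IH(2)] seq_ok_iff by blast
    show "insert M (insert K ?G) \<turnstile> N" using eL.IH(2) by (simp add: insert_commute)
  qed (use provR_hyp[OF ok] in simp_all)
  then show ?case using provL_cut[OF eL.IH(1)] by blast
next
  case (blindL1 M K \<Gamma> N)
  let ?G = "insert K (insert (Blind M K) \<Gamma>)"
  have ok: "hyps_ok ar pl R ?G"
    using provL_seq_ok[OF blindL1.IH(1)] seq_ok_iff hyps_ok_insert by blast
  have "?G \<turnstile> N"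
  proof (rule provL_decompose_left[of Blind])
    show "seq_ok ar pl R ?G N" using ok provL_seq_ok[OF blindL1.IH(2)] seq_ok_iff by blast
    show "insert M (insert K ?G) \<turnstile> N" using blindL1.IH(2) by (simp add: insert_commute)
  qed (use provR_hyp[OF ok] in simp_all)
  then show ?case using provL_cut[OF blindL1.IH(1)] by blast
next
  case (blindL2 M Rr K \<Gamma> N)
  let ?G = "insert Rr (insert (Sign (Blind M Rr) K) \<Gamma>)"
  have ok: "hyps_ok ar pl R ?G"
    using provL_seq_ok[OF blindL2.IH(1)] seq_ok_iff hyps_ok_insert by blast
  have "?G \<turnstile> N"
  proof (rule provL_unblind_left)
    show "seq_ok ar pl R ?G N" using ok provL_seq_ok[OF blindL2.IH(2)] seq_ok_iff by blast
    show "insert (Sign M K) (insert Rr ?G) \<turnstile> N" using blindL2.IH(2) by (simp add: insert_commute)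
  qed (use provR_hyp[OF ok] in simp_all)
  then show ?case using provL_cut[OF blindL2.IH(1)] by blast
next
  case (pR \<Gamma> M N)
  then show ?case using provL_right_rule[of Pair] by blast
next
  case (eR \<Gamma> M N)
  then show ?case using provL_right_rule[of Enc] by blast
next
  case (signR \<Gamma> M N)
  then show ?case using provL_right_rule[of Sign] by blast
next
  case (blindR \<Gamma> M N)
  then show ?case using provL_right_rule[of Blind] by blast
next
  case (signL M K L \<Gamma> N)
  then show ?case using provL.sign by blast
next
  case (gs \<Gamma> M A)
  then show ?case using provL_cut by blast
qed (use provL_cut provL.lp in blast)+

end

lemma provR_provS: "provR ar pl R \<Gamma> M \<Longrightarrow> provS ar pl R \<Gamma> M"
  by (induction rule: provR.induct) (auto intro: provS.intros)

lemma provL_provS: "provL ar pl R \<Gamma> M \<Longrightarrow> provS ar pl R \<Gamma> M"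
  by (induction rule: provL.induct) (auto intro: provS.intros provR_provS)

theorem proposition5:
  fixes ar :: "'f \<Rightarrow> nat" and pl :: "'f option" and R :: "('f etrm \<times> 'f etrm) set"
    and \<Gamma> :: "'f trm set" and M :: "'f trm"
  assumes "good_theory ar pl R"
  shows "provS ar pl R \<Gamma> M \<longleftrightarrow> provL ar pl R \<Gamma> M"
proof -
  have rule_vars: "\<And>l r. (l, r) \<in> R \<Longrightarrow> evars r \<subseteq> evars l"
    using assms unfolding good_theory_def by fast
  have confluent: "confluent_ac ar pl R"
    using assms unfolding good_theory_def by blast
  show ?thesis using provS_provL[OF rule_vars confluent] provL_provS by blast
qed

end
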